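(* Let $\gamma>0$ and $s\in(0,q^{-1/2})$. For every $g\in\mathcal H^D\mathcal I^{\mathcal E}_\gamma$ and every $F\in\mathcal M_s$, the product $g*_\gamma F$ is well defined and belongs to $\mathcal M_s$; moreover $(f*_\gamma g)*_\gamma F=f*_\gamma(g*_\gamma F)$ for all $f,g\in\mathcal H^D\mathcal I^{\mathcal E}_\gamma$ and $F\in\mathcal M_s$. Hence $\mathcal M_s$ is a left module over the algebra $(\mathcal H^D\mathcal I^{\mathcal E}_\gamma,*_\gamma)$, and over its quotient by the commutator ideal.
   Context: Fix $q\in(0,1)$. Notation: $(a;q)_k=\prod_{j=0}^{k-1}(1-aq^j)$, $(a;q)_\infty=\lim_k(a;q)_k$, $[k]_q!=(q;q)_k/(1-q)^k$, $e_q(x)=1/(x;q)_\infty$. The $q$-derivative is $(\partial f)(x)=\frac{f(x)-f(qx)}{(1-q)x}$ (extended to $x=0$ by continuity for $f$ holomorphic near $0$). For $\gamma>0$, $L(\gamma)=\{\pm q^k\gamma:k\in\mathbb Z\}$ and $\int_\gamma f=(1-q)\sum_{k\in\mathbb Z}\sum_{\epsilon=\pm1}q^k\gamma f(\epsilon q^k\gamma)$ whenever absolutely convergent. $\mathcal I^\infty_\gamma$ is the set of functions $f$ on $L(\gamma)$ with $\int_\gamma|f(x)x^e|<\infty$ for all integers $e\ge0$. Moments: $\mu_{e,\gamma}(f)=q^{(e^2+e)/2}\int_\gamma f(x)x^e$. The $q$-moment series is $\mu_\gamma(f)(t)=\sum_{k\ge0}\mu_{k,\gamma}(f)t^k/[k]_q!$;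 $\mathcal I^{\mathcal E}_\gamma$ is the set of $f\in\mathcal I^\infty_\gamma$ with $\mu_\gamma(f)$ entire; $\mathcal H^D\mathcal I^{\mathcal E}_\gamma$ is the set of $f\in\mathcal I^{\mathcal E}_\gamma$ for which there is an open disk centered at $0$ containing $\{\pm q^k\gamma:k\ge0\}$ and a holomorphic function on it agreeing with $f$ on the lattice points in the disk. The $q$-convolution of $f\in\mathcal I^\infty_\gamma$ with $g$ is $(f*_\gamma g)(x)=\sum_{e\ge0}\frac{(-1)^e\mu_{e,\gamma}(f)}{[e]_q!}(\partial^eg)(x)$ at all $x$ where the $q$-derivatives are defined and the series converges absolutely. For $s>0$, $\mathcal M_s$ is the set of functions $F(x)=f(x)e_{q^2}(-x^2)$ (holomorphic on $|\mathrm{Im}\,x|<1$) where $f(x)=\sum_{l\ge0}a_lx^l$ with $|a_l|\le Cs^lq^{l^2/2}$ for all $l$, for some $C>0$. *)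

theory Defs
  imports "HOL-Analysis.Analysis"
begin

definition qpoch :: "'a::real_normed_field \<Rightarrow> 'a \<Rightarrow> nat \<Rightarrow> 'a" where
  "qpoch a q k = (\<Prod>j<k. (1 - a * q ^ j))"

definition qpoch_inf :: "'a::real_normed_field \<Rightarrow> 'a \<Rightarrow> 'a" where
  "qpoch_inf a q = lim (\<lambda>k. qpoch a q k)"

definition qfact :: "real \<Rightarrow> nat \<Rightarrow> real" where
  "qfact q k = qpoch q q k / (1 - q) ^ k"

definition qexp :: "complex \<Rightarrow> complex \<Rightarrow> complex" where
  "qexp q x = 1 / qpoch_inf x q"

definition qderiv :: "real \<Rightarrow> (complex \<Rightarrow> complex) \<Rightarrow> complex \<Rightarrow> complex" where
  "qderiv q f x =
     (if x = 0 then Lim (at 0) (\<lambda>y. (f y - f (of_real q * y)) / ((1 - of_real q) * y))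
      else (f x - f (of_real q * x)) / ((1 - of_real q) * x))"

definition qlattice :: "real \<Rightarrow> real \<Rightarrow> complex set" where
  "qlattice q \<gamma> = {complex_of_real (\<epsilon> * q powi k * \<gamma>) | k \<epsilon>. \<epsilon> \<in> {-1, 1}}"

definition qint_term :: "real \<Rightarrow> real \<Rightarrow> (complex \<Rightarrow> complex) \<Rightarrow> int \<times> real \<Rightarrow> complex" where
  "qint_term q \<gamma> f = (\<lambda>(k, \<epsilon>). complex_of_real (q powi k * \<gamma>) * f (complex_of_real (\<epsilon> * q powi k * \<gamma>)))"

definition qint :: "real \<Rightarrow> real \<Rightarrow> (complex \<Rightarrow> complex) \<Rightarrow> complex" where
  "qint q \<gamma> f = complex_of_real (1 - q) * infsum (qint_term q \<gamma> f) (UNIV \<times> {-1, 1})"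

definition I_inf :: "real \<Rightarrow> real \<Rightarrow> (complex \<Rightarrow> complex) set" where
  "I_inf q \<gamma> = {f. \<forall>e::nat. (\<lambda>i. norm (qint_term q \<gamma> (\<lambda>x. f x * x ^ e) i)) summable_on (UNIV \<times> {-1, 1})}"

definition qmoment :: "real \<Rightarrow> real \<Rightarrow> nat \<Rightarrow> (complex \<Rightarrow> complex) \<Rightarrow> complex" where
  "qmoment q \<gamma> e f = complex_of_real (q ^ ((e ^ 2 + e) div 2)) * qint q \<gamma> (\<lambda>x. f x * x ^ e)"

definition I_E :: "real \<Rightarrow> real \<Rightarrow> (complex \<Rightarrow> complex) set" where
  "I_E q \<gamma> = {f. f \<in> I_inf q \<gamma> \<and>
     (\<forall>t::complex. summable (\<lambda>k. qmoment q \<gamma> k f * t ^ k / complex_of_real (qfact q k)))}"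

definition HD_I_E :: "real \<Rightarrow> real \<Rightarrow> (complex \<Rightarrow> complex) set" where
  "HD_I_E q \<gamma> = {f. f \<in> I_E q \<gamma> \<and>
     (\<exists>r h. (\<forall>k::nat. \<forall>\<epsilon>\<in>{-1,1::real}. complex_of_real (\<epsilon> * q ^ k * \<gamma>) \<in> ball 0 r) \<and>
            h holomorphic_on ball 0 r \<and>
            (\<forall>x \<in> qlattice q \<gamma> \<inter> ball 0 r. h x = f x))}"

definition qconv_term :: "real \<Rightarrow> real \<Rightarrow> (complex \<Rightarrow> complex) \<Rightarrow> (complex \<Rightarrow> complex) \<Rightarrow> complex \<Rightarrow> nat \<Rightarrow> complex" where
  "qconv_term q \<gamma> f g x e =
     (-1) ^ e * qmoment q \<gamma> e f / complex_of_real (qfact q e) * (qderiv q ^^ e) g x"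

definition qconv_defined :: "real \<Rightarrow> real \<Rightarrow> (complex \<Rightarrow> complex) \<Rightarrow> (complex \<Rightarrow> complex) \<Rightarrow> complex \<Rightarrow> bool" where
  "qconv_defined q \<gamma> f g x = summable (\<lambda>e. norm (qconv_term q \<gamma> f g x e))"

definition qconv :: "real \<Rightarrow> real \<Rightarrow> (complex \<Rightarrow> complex) \<Rightarrow> (complex \<Rightarrow> complex) \<Rightarrow> complex \<Rightarrow> complex" where
  "qconv q \<gamma> f g x = (\<Sum>e. qconv_term q \<gamma> f g x e)"

definition M_s :: "real \<Rightarrow> real \<Rightarrow> (complex \<Rightarrow> complex) set" where
  "M_s q s = {F. \<exists>a C. C > 0 \<and>
      (\<forall>l. norm (a l :: complex) \<le> C * s ^ l * q powr (real (l ^ 2) / 2)) \<and>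
      (\<forall>x. \<bar>Im x\<bar> < 1 \<longrightarrow>
           F x = (\<Sum>l. a l * x ^ l) * qexp (complex_of_real (q ^ 2)) (- (x ^ 2)))}"

end

theory Submission
  imports Defs "HOL-Complex_Analysis.Cauchy_Integral_Formula"
begin

(* Write F in M_s as F = f * E with E(x) = e_{q^2}(-x^2) and f = sum_l a_l x^l.  The functional
   equation E(q x) = (1 + x^2) E(x) turns the q-derivative of F into f' * E, where the coefficients
   of f' depend linearly on those of f and the weighted bound |a_l| <= C s^l q^(l^2/2) is only
   multiplied by a constant K.  For g in I^E the coefficients c_e = (-1)^e mu_e(g) / [e]_q! of the
   q-convolution satisfy sum_e |c_e| R^e < oo for every R, so g *_gamma F = sum_e c_e D_q^e F
   converges absolutely, can be computed on the coefficients of f, and stays in M_s.  On coefficient sequences the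
   action of g is a power series in one operator, hence two actions commute.  Associativity amounts
   to the coefficients of f *_gamma g being the Cauchy product of those of f and g: the moments of
   sum_d c_d D_q^d g can be taken termwise, since the absolute moments of D_q^d g grow at most
   geometrically in d (near 0 by the Taylor expansion of g, far out by the moments of g itself),
   and q-integration by parts gives mu_n(D_q^d g) = (-1)^d [n]_q! / [n-d]_q! mu_(n-d)(g). *)

section \<open>q-Pochhammer products and the q-Gaussian\<close>

lemma qpoch_Suc: "qpoch a q (Suc k) = qpoch a q k * (1 - a * q ^ k)"
  by (simp add: qpoch_def)

lemma qpoch_Suc_shift: "qpoch a q (Suc k) = (1 - a) * qpoch (a * q) q k"
proof (induction k)
  case 0
  then show ?case by (simp add: qpoch_def)
next
  case (Suc k)
  have "qpoch a q (Suc (Suc k)) = (1 - a) * (qpoch (a * q) q k * (1 - (a * q) * q ^ k))"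
    unfolding qpoch_Suc[of a q "Suc k"] Suc by (simp add: mult.assoc)
  also have "\<dots> = (1 - a) * qpoch (a * q) q (Suc k)"
    by (simp only: qpoch_Suc)
  finally show ?case .
qed

lemma qpoch_tendsto_qpoch_inf:
  fixes a :: complex
  assumes "0 \<le> Q" "Q < 1"
  shows "qpoch a (of_real Q) \<longlonglongrightarrow> qpoch_inf a (of_real Q)"
proof -
  let ?f = "\<lambda>j. 1 - a * of_real Q ^ j"
  have "summable (\<lambda>j. norm (?f j - 1))"
    using assms summable_mult[OF summable_geometric, of Q "norm a"] by (simp add: norm_mult norm_power)
  hence "convergent_prod ?f"
    by (intro abs_convergent_prod_imp_convergent_prod summable_imp_abs_convergent_prod)
  hence "(\<lambda>n. qpoch a (of_real Q) (Suc n)) \<longlonglongrightarrow> prodinf ?f"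
    using convergent_prod_LIMSEQ by (simp add: qpoch_def lessThan_Suc_atMost)
  hence "convergent (qpoch a (of_real Q))"
    using LIMSEQ_imp_Suc by (auto simp: convergent_def)
  then show ?thesis
    unfolding qpoch_inf_def by (simp add: convergent_LIMSEQ_iff)
qed

lemma qpoch_inf_shift:
  fixes a :: complex
  assumes "0 \<le> Q" "Q < 1"
  shows "qpoch_inf a (of_real Q) = (1 - a) * qpoch_inf (a * of_real Q) (of_real Q)"
proof -
  have "(\<lambda>k. qpoch a (of_real Q) (Suc k)) \<longlonglongrightarrow> (1 - a) * qpoch_inf (a * of_real Q) (of_real Q)"
    unfolding qpoch_Suc_shift by (intro tendsto_mult tendsto_const qpoch_tendsto_qpoch_inf assms)
  with qpoch_tendsto_qpoch_inf[OF assms, of a] show ?thesis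
    using LIMSEQ_imp_Suc LIMSEQ_unique by blast
qed

lemma qpoch_inf_0:
  assumes "0 \<le> Q" "Q < 1"
  shows "qpoch_inf (0::complex) (of_real Q) = 1"
proof -
  have "qpoch (0::complex) (of_real Q) = (\<lambda>k. 1)"
    by (simp add: qpoch_def fun_eq_iff)
  hence "qpoch (0::complex) (of_real Q) \<longlonglongrightarrow> 1"
    by simp
  then show ?thesis
    by (rule LIMSEQ_unique[OF qpoch_tendsto_qpoch_inf[OF assms]])
qed

lemma norm_qpoch_minus_1_le:
  fixes a :: complex
  assumes "0 \<le> Q" "Q < 1"
  shows "norm (qpoch a (of_real Q) k - 1) \<le> exp (norm a / (1 - Q)) - 1"
proof -
  have "norm (qpoch a (of_real Q) k - 1) \<le> (\<Prod>j<k. 1 + norm a * Q ^ j) - 1"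
    using norm_prod_minus1_le_prod_minus1[of "\<lambda>j. - a * of_real Q ^ j" "{..<k}"] assms
    by (simp add: qpoch_def norm_mult norm_power)
  also have "\<dots> \<le> exp (\<Sum>j<k. norm a * Q ^ j) - 1"
    using prod_le_exp_sum[of "{..<k}" "\<lambda>j. norm a * Q ^ j"] assms by simp
  also have "(\<Sum>j<k. norm a * Q ^ j) \<le> (\<Sum>j. norm a * Q ^ j)"
    using assms by (intro sum_le_suminf summable_mult summable_geometric) auto
  also have "\<dots> = norm a / (1 - Q)"
    using assms by (simp add: suminf_mult suminf_geometric divide_simps)
  finally show ?thesis
    by simp
qed

lemma norm_qpoch_inf_minus_1_le:
  fixes a :: complex
  assumes "0 \<le> Q" "Q < 1"
  shows "norm (qpoch_inf a (of_real Q) - 1) \<le> exp (norm a / (1 - Q)) - 1"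
  by (rule LIMSEQ_le_const2[OF tendsto_norm[OF tendsto_diff[OF qpoch_tendsto_qpoch_inf[OF assms]
        tendsto_const]]]) (use norm_qpoch_minus_1_le[OF assms] in auto)

definition qgauss :: "real \<Rightarrow> complex \<Rightarrow> complex" where
  "qgauss q x = qexp (complex_of_real (q ^ 2)) (- (x ^ 2))"

lemma one_plus_square_neq_0_strip:
  assumes "\<bar>Im x\<bar> < 1"
  shows "1 + x ^ 2 \<noteq> 0"
proof
  assume zero: "1 + x ^ 2 = 0"
  have "(Im x)\<^sup>2 = 1 + (Re x)\<^sup>2"
    using arg_cong[OF zero, of Re] by (simp add: power2_eq_square)
  moreover have "(Im x)\<^sup>2 < 1"
    using assms by (simp add: abs_square_less_1)
  ultimately show False
    using zero_le_power2[of "Re x"] by linarith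
qed

lemma qgauss_mult_q:
  assumes "0 < q" "q < 1" "1 + x ^ 2 \<noteq> 0"
  shows "qgauss q (of_real q * x) = (1 + x ^ 2) * qgauss q x"
proof -
  have "0 \<le> q ^ 2" "q ^ 2 < 1"
    using assms by (auto simp: power_less_one_iff)
  moreover have "- (x ^ 2) * of_real (q ^ 2) = - ((of_real q * x) ^ 2)"
    by (simp add: power_mult_distrib)
  ultimately have "qpoch_inf (- (x ^ 2)) (of_real (q ^ 2))
      = (1 + x ^ 2) * qpoch_inf (- ((of_real q * x) ^ 2)) (of_real (q ^ 2))"
    using qpoch_inf_shift[of "q ^ 2" "- (x ^ 2)"] by simp
  then show ?thesis
    using assms(3) by (simp add: qgauss_def qexp_def)
qed

lemma qgauss_0: "0 < q \<Longrightarrow> q < 1 \<Longrightarrow> qgauss q 0 = 1"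
  using qpoch_inf_0[of "q ^ 2"] by (simp add: qgauss_def qexp_def power_less_one_iff)

lemma qgauss_tendsto_1:
  assumes "0 < q" "q < 1"
  shows "(qgauss q \<longlongrightarrow> 1) (at 0)"
proof -
  have q2: "0 \<le> q ^ 2" "q ^ 2 < 1"
    using assms by (auto simp: power_less_one_iff)
  let ?P = "\<lambda>y. qpoch_inf (- (y ^ 2)) (complex_of_real (q ^ 2))"
  have "((\<lambda>y::complex. exp (norm y ^ 2 / (1 - q ^ 2)) - 1)
          \<longlongrightarrow> exp (norm (0::complex) ^ 2 / (1 - q ^ 2)) - 1) (at 0)"
    using q2 by (intro tendsto_intros) auto
  hence majorant: "((\<lambda>y::complex. exp (norm y ^ 2 / (1 - q ^ 2)) - 1) \<longlongrightarrow> 0) (at 0)"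
    by simp
  have "norm (?P y - 1) \<le> exp (norm y ^ 2 / (1 - q ^ 2)) - 1" for y
    using norm_qpoch_inf_minus_1_le[OF q2, of "- (y ^ 2)"] by (simp add: norm_power)
  hence "((\<lambda>y. ?P y - 1) \<longlongrightarrow> 0) (at 0)"
    by (intro Lim_null_comparison[OF _ majorant] always_eventually) auto
  hence "((\<lambda>y. 1 / ?P y) \<longlongrightarrow> 1 / 1) (at 0)"
    by (intro tendsto_divide tendsto_const) (auto simp: LIM_zero_iff)
  then show ?thesis
    unfolding qgauss_def qexp_def by simp
qed

definition qnum :: "real \<Rightarrow> nat \<Rightarrow> real" where
  "qnum q n = (1 - q ^ n) / (1 - q)"

lemma qnum_nonneg: "0 < q \<Longrightarrow> q < 1 \<Longrightarrow> 0 \<le> qnum q n"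
  by (simp add: qnum_def power_le_one)

lemma qnum_le: "0 < q \<Longrightarrow> q < 1 \<Longrightarrow> qnum q n \<le> 1 / (1 - q)"
  by (simp add: qnum_def divide_right_mono)

lemma qfact_Suc: "q \<noteq> 1 \<Longrightarrow> qfact q (Suc k) = qfact q k * qnum q (Suc k)"
  by (simp add: qfact_def qnum_def qpoch_Suc field_simps)

lemma qfact_pos:
  assumes "0 < q" "q < 1"
  shows "0 < qfact q n"
proof -
  have "q * q ^ j \<le> q * 1" for j
    using assms by (intro mult_left_mono power_le_one) auto
  hence "q * q ^ j < 1" for j
    using assms(2) le_less_trans by auto
  then show ?thesis
    using assms by (auto simp: qfact_def qpoch_def intro!: divide_pos_pos prod_pos)
qed

section \<open>Coefficient sequences of the space \<open>M\<^sub>s\<close>\<close>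

definition pser :: "(nat \<Rightarrow> complex) \<Rightarrow> complex \<Rightarrow> complex" where
  "pser b x = (\<Sum>l. b l * x ^ l)"

definition Ms_weight :: "real \<Rightarrow> real \<Rightarrow> nat \<Rightarrow> real" where
  "Ms_weight q s l = s ^ l * q powr (real (l ^ 2) / 2)"

definition Ms_coeff_bound :: "real \<Rightarrow> real \<Rightarrow> real \<Rightarrow> (nat \<Rightarrow> complex) \<Rightarrow> bool" where
  "Ms_coeff_bound q s C b \<longleftrightarrow> (\<forall>l. norm (b l) \<le> C * Ms_weight q s l)"

definition Ms_repr :: "real \<Rightarrow> (complex \<Rightarrow> complex) \<Rightarrow> (nat \<Rightarrow> complex) \<Rightarrow> bool" where
  "Ms_repr q G b \<longleftrightarrow> (\<forall>x. \<bar>Im x\<bar> < 1 \<longrightarrow> G x = pser b x * qgauss q x)"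

text \<open>Because of \<open>qgauss q (q x) = (1 + x\<^sup>2) qgauss q x\<close>, the q-derivative of
  \<open>pser b * qgauss q\<close> is \<open>pser c * qgauss q\<close>, where \<open>c = Ms_qderiv_coeffs q b\<close>
  collects the coefficients of \<open>(pser b x - (1 + x\<^sup>2) pser b (q x)) / ((1 - q) x)\<close>.\<close>
definition Ms_qderiv_coeffs :: "real \<Rightarrow> (nat \<Rightarrow> complex) \<Rightarrow> nat \<Rightarrow> complex" where
  "Ms_qderiv_coeffs q b l = of_real (qnum q (Suc l)) * b (Suc l)
     - (if l = 0 then 0 else of_real (q ^ (l - 1) / (1 - q)) * b (l - 1))"

definition Ms_qderiv_factor :: "real \<Rightarrow> real \<Rightarrow> real" where
  "Ms_qderiv_factor q s = (s * sqrt q + 1 / (s * sqrt q)) / (1 - q)"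

lemma Ms_weight_Suc:
  assumes "0 < q"
  shows "Ms_weight q s (Suc l) = Ms_weight q s l * s * q ^ l * sqrt q"
proof -
  have "real ((Suc l)\<^sup>2) / 2 = real (l\<^sup>2) / 2 + real l + 1 / 2"
    by (simp add: power2_eq_square algebra_simps)
  hence "q powr (real ((Suc l)\<^sup>2) / 2) = q powr (real (l\<^sup>2) / 2) * q powr (real l) * q powr (1 / 2)"
    by (simp only: powr_add)
  also have "\<dots> = q powr (real (l\<^sup>2) / 2) * q ^ l * sqrt q"
    using assms by (simp add: powr_realpow powr_half_sqrt)
  finally show ?thesis
    by (simp add: Ms_weight_def)
qed

lemma Ms_qderiv_coeffs_scaled:
  assumes "q \<noteq> 1"
  shows "(1 - of_real q) * Ms_qderiv_coeffs q b l
    = (1 - of_real q ^ Suc l) * b (Suc l) - (if l = 0 then 0 else of_real q ^ (l - 1) * b (l - 1))"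
proof -
  have "(1 - q) * qnum q (Suc l) = 1 - q ^ Suc l" "(1 - q) * (q ^ (l - 1) / (1 - q)) = q ^ (l - 1)"
    using assms by (simp_all add: qnum_def)
  hence "(1 - of_real q) * of_real (qnum q (Suc l)) = (1 - of_real q ^ Suc l :: complex)"
    and "(1 - of_real q) * of_real (q ^ (l - 1) / (1 - q)) = (of_real q ^ (l - 1) :: complex)"
    by (metis of_real_1 of_real_diff of_real_mult of_real_power)+
  then show ?thesis
    using assms unfolding Ms_qderiv_coeffs_def
    by (cases l) (simp_all add: right_diff_distrib mult.assoc[symmetric])
qed

lemma Ms_qderiv_coeffs_scale: "Ms_qderiv_coeffs q (\<lambda>l. a * b l) = (\<lambda>l. a * Ms_qderiv_coeffs q b l)"
  by (simp add: Ms_qderiv_coeffs_def fun_eq_iff algebra_simps)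

lemma Ms_qderiv_coeffs_suminf:
  assumes "\<And>l. summable (\<lambda>e. b e l)"
  shows "Ms_qderiv_coeffs q (\<lambda>l. \<Sum>e. b e l) l = (\<Sum>e. Ms_qderiv_coeffs q (b e) l)"
proof (cases l)
  case 0
  then show ?thesis
    unfolding Ms_qderiv_coeffs_def using suminf_mult[OF assms[of 1]] by simp
next
  case (Suc m)
  have "Ms_qderiv_coeffs q (\<lambda>l. \<Sum>e. b e l) l
      = (\<Sum>e. of_real (qnum q (Suc l)) * b e (Suc l)) - (\<Sum>e. of_real (q ^ m / (1 - q)) * b e m)"
    unfolding Ms_qderiv_coeffs_def Suc
    by (simp del: of_real_divide of_real_power add: suminf_mult assms)
  also have "\<dots> = (\<Sum>e. of_real (qnum q (Suc l)) * b e (Suc l) - of_real (q ^ m / (1 - q)) * b e m)"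
    by (intro suminf_diff summable_mult assms)
  finally show ?thesis
    unfolding Ms_qderiv_coeffs_def Suc by (simp del: of_real_divide of_real_power)
qed

locale q_param =
  fixes q :: real
  assumes q_pos: "0 < q" and q_less_1: "q < 1"

locale q_weight = q_param +
  fixes s :: real
  assumes s_pos: "0 < s"
begin

lemma Ms_weight_pos: "0 < Ms_weight q s l"
  using q_pos s_pos by (simp add: Ms_weight_def)

lemma Ms_qderiv_factor_pos: "0 < Ms_qderiv_factor q s"
  unfolding Ms_qderiv_factor_def using q_pos q_less_1 s_pos by (intro divide_pos_pos add_pos_pos) auto

lemma Ms_coeff_bound_nonneg: "Ms_coeff_bound q s C b \<Longrightarrow> 0 \<le> C"
  unfolding Ms_coeff_bound_def using Ms_weight_pos[of 0]
  by (metis norm_ge_zero order_trans zero_le_mult_iff linorder_not_le less_eq_real_def)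

lemma Ms_coeff_bound_mono: "Ms_coeff_bound q s C b \<Longrightarrow> C \<le> C' \<Longrightarrow> Ms_coeff_bound q s C' b"
  unfolding Ms_coeff_bound_def using Ms_weight_pos
  by (meson less_imp_le mult_right_mono order_trans)

lemma Ms_coeff_bound_qderiv:
  assumes b: "Ms_coeff_bound q s C b"
  shows "Ms_coeff_bound q s (C * Ms_qderiv_factor q s) (Ms_qderiv_coeffs q b)"
  unfolding Ms_coeff_bound_def
proof
  fix l
  have C: "0 \<le> C"
    by (rule Ms_coeff_bound_nonneg[OF b])
  have bl: "norm (b l) \<le> C * Ms_weight q s l" for l
    using b by (simp add: Ms_coeff_bound_def)
  have sq: "0 < sqrt q" "sqrt q \<le> 1" "0 < 1 - q"
    using q_pos q_less_1 by auto
  have w: "0 < Ms_weight q s l"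
    by (rule Ms_weight_pos)
  have up: "norm (of_real (qnum q (Suc l)) * b (Suc l))
      \<le> C * (s * sqrt q / (1 - q)) * Ms_weight q s l"
  proof -
    have "norm (of_real (qnum q (Suc l)) * b (Suc l)) = qnum q (Suc l) * norm (b (Suc l))"
      using qnum_nonneg[OF q_pos q_less_1] by (simp add: norm_mult)
    also have "\<dots> \<le> (1 / (1 - q)) * (C * Ms_weight q s (Suc l))"
      using bl[of "Suc l"] qnum_le[OF q_pos q_less_1] qnum_nonneg[OF q_pos q_less_1] sq
      by (intro mult_mono) auto
    also have "\<dots> \<le> (1 / (1 - q)) * (C * (Ms_weight q s l * s * 1 * sqrt q))"
      unfolding Ms_weight_Suc[OF q_pos] using q_pos q_less_1 s_pos C w sq
      by (intro mult_left_mono mult_right_mono) (auto simp: power_le_one)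
    finally show ?thesis
      by (simp add: field_simps)
  qed
  have down: "norm (if l = 0 then 0 else of_real (q ^ (l - 1) / (1 - q)) * b (l - 1))
      \<le> C * (1 / (s * sqrt q) / (1 - q)) * Ms_weight q s l"
  proof (cases l)
    case 0
    then show ?thesis
      using C w sq s_pos by simp
  next
    case (Suc m)
    have "norm (of_real (q ^ m / (1 - q)) * b m) = q ^ m / (1 - q) * norm (b m)"
      using q_pos q_less_1 by (simp only: norm_mult norm_of_real) simp
    also have "\<dots> \<le> q ^ m / (1 - q) * (C * Ms_weight q s m)"
      using bl[of m] q_pos q_less_1 by (intro mult_left_mono) auto
    also have "\<dots> = C * (1 / (s * sqrt q) / (1 - q)) * Ms_weight q s (Suc m)"
      unfolding Ms_weight_Suc[OF q_pos] using sq s_pos by (simp add: field_simps)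
    finally show ?thesis
      using Suc by simp
  qed
  have "norm (Ms_qderiv_coeffs q b l)
      \<le> C * (s * sqrt q / (1 - q)) * Ms_weight q s l + C * (1 / (s * sqrt q) / (1 - q)) * Ms_weight q s l"
    unfolding Ms_qderiv_coeffs_def by (rule order.trans[OF norm_triangle_ineq4 add_mono[OF up down]])
  also have "\<dots> = C * Ms_qderiv_factor q s * Ms_weight q s l"
    unfolding Ms_qderiv_factor_def add_divide_distrib by (simp only: distrib_left distrib_right)
  finally show "norm (Ms_qderiv_coeffs q b l) \<le> C * Ms_qderiv_factor q s * Ms_weight q s l" .
qed

lemma Ms_coeff_bound_qderiv_iter:
  "Ms_coeff_bound q s C b \<Longrightarrow>
    Ms_coeff_bound q s (C * Ms_qderiv_factor q s ^ n) ((Ms_qderiv_coeffs q ^^ n) b)"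
  by (induction n) (auto dest: Ms_coeff_bound_qderiv simp: mult_ac)

lemma Ms_weight_summable:
  assumes r: "0 \<le> r"
  shows "summable (\<lambda>l. Ms_weight q s l * r ^ l)"
proof -
  define c where "c = s * sqrt q * r"
  have c: "0 \<le> c"
    using r s_pos q_pos by (simp add: c_def)
  obtain N where N: "q ^ N < 1 / (2 * (c + 1))"
    using real_arch_pow_inv[of "1 / (2 * (c + 1))" q] q_pos q_less_1 c by auto
  show ?thesis
  proof (rule summable_ratio_test[of "1 / 2" N])
    fix n
    assume "N \<le> n"
    hence "q ^ n \<le> q ^ N"
      using q_pos q_less_1 by (simp add: power_decreasing)
    hence "c * q ^ n \<le> (c + 1) * (1 / (2 * (c + 1)))"
      using N c q_pos by (intro mult_mono) auto
    moreover have "(c + 1) * (1 / (2 * (c + 1))) = 1 / 2"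
      using c by simp
    ultimately have cq: "c * q ^ n \<le> 1 / 2"
      by linarith
    have "Ms_weight q s (Suc n) * r ^ Suc n = (Ms_weight q s n * r ^ n) * (c * q ^ n)"
      unfolding Ms_weight_Suc[OF q_pos] by (simp add: c_def algebra_simps)
    also have "\<dots> \<le> (Ms_weight q s n * r ^ n) * (1 / 2)"
      using cq Ms_weight_pos[of n] r by (intro mult_left_mono) auto
    finally show "norm (Ms_weight q s (Suc n) * r ^ Suc n) \<le> 1 / 2 * norm (Ms_weight q s n * r ^ n)"
      using Ms_weight_pos[of n] Ms_weight_pos[of "Suc n"] r by (simp add: abs_mult)
  qed simp
qed

lemma Ms_coeff_bound_summable_norm:
  assumes "Ms_coeff_bound q s C b"
  shows "summable (\<lambda>l. norm (b l * x ^ l))"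
proof (rule summable_comparison_test[OF _ summable_mult[OF Ms_weight_summable[of "norm x"], of C]])
  have "norm (b l) * norm x ^ l \<le> (C * Ms_weight q s l) * norm x ^ l" for l
    using assms unfolding Ms_coeff_bound_def by (intro mult_right_mono) auto
  then show "\<exists>N. \<forall>l\<ge>N. norm (norm (b l * x ^ l)) \<le> C * (Ms_weight q s l * norm x ^ l)"
    by (auto simp: norm_mult norm_power mult.assoc)
qed simp

lemma Ms_coeff_bound_summable: "Ms_coeff_bound q s C b \<Longrightarrow> summable (\<lambda>l. b l * x ^ l)"
  by (rule summable_norm_cancel[OF Ms_coeff_bound_summable_norm])

lemma M_s_iff: "F \<in> M_s q s \<longleftrightarrow> (\<exists>b C. Ms_repr q F b \<and> Ms_coeff_bound q s C b)"
proof
  assume "F \<in> M_s q s"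
  then show "\<exists>b C. Ms_repr q F b \<and> Ms_coeff_bound q s C b"
    by (force simp: M_s_def Ms_repr_def Ms_coeff_bound_def Ms_weight_def pser_def qgauss_def
        mult.assoc)
next
  assume "\<exists>b C. Ms_repr q F b \<and> Ms_coeff_bound q s C b"
  then obtain b C where "Ms_repr q F b" "Ms_coeff_bound q s C b"
    by blast
  moreover from this(2) have "Ms_coeff_bound q s (\<bar>C\<bar> + 1) b"
    by (rule Ms_coeff_bound_mono) simp
  ultimately show "F \<in> M_s q s"
    unfolding M_s_def
    by (intro CollectI exI[of _ b] exI[of _ "\<bar>C\<bar> + 1"])
      (auto simp: Ms_repr_def Ms_coeff_bound_def Ms_weight_def pser_def qgauss_def mult.assoc)
qed

lemma pser_minus_pser_mult_q:
  assumes b: "Ms_coeff_bound q s C b"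
  shows "pser b x - (1 + x\<^sup>2) * pser b (of_real q * x)
    = of_real (1 - q) * x * pser (Ms_qderiv_coeffs q b) x"
proof -
  define y where "y = of_real q * x"
  define g where "g l = (if 2 \<le> l then b (l - 2) * y ^ (l - 2) * x\<^sup>2 else 0)" for l
  define u where "u l = b l * x ^ l - b l * y ^ l - g l" for l
  have sx: "(\<lambda>l. b l * x ^ l) sums pser b x" and sy: "(\<lambda>l. b l * y ^ l) sums pser b y"
    unfolding pser_def by (intro summable_sums Ms_coeff_bound_summable[OF b])+
  have "(\<lambda>l. g (l + 2)) sums (pser b y * x\<^sup>2)"
    unfolding g_def using sums_mult2[OF sy, of "x\<^sup>2"] by simp
  hence "g sums (pser b y * x\<^sup>2)"
    by (subst (asm) sums_iff_shift) (simp add: g_def)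
  hence u: "u sums (pser b x - pser b y - pser b y * x\<^sup>2)"
    unfolding u_def by (intro sums_diff sx sy)
  have "u (Suc l) = of_real (1 - q) * x * (Ms_qderiv_coeffs q b l * x ^ l)" for l
    unfolding mult.assoc[symmetric] mult.commute[of _ x] 
    unfolding mult.assoc of_real_diff of_real_1 Ms_qderiv_coeffs_scaled[OF less_imp_neq[OF q_less_1]]
    by (cases l) (simp_all add: u_def g_def y_def algebra_simps power_mult_distrib power2_eq_square)
  moreover have "(\<lambda>l. of_real (1 - q) * x * (Ms_qderiv_coeffs q b l * x ^ l))
      sums (of_real (1 - q) * x * pser (Ms_qderiv_coeffs q b) x)"
    unfolding pser_def
    by (intro sums_mult summable_sums Ms_coeff_bound_summable[OF Ms_coeff_bound_qderiv[OF b]])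
  ultimately have "(\<lambda>l. u (Suc l)) sums (of_real (1 - q) * x * pser (Ms_qderiv_coeffs q b) x)"
    by simp
  moreover have "u 0 = 0"
    by (simp add: u_def g_def)
  ultimately have "u sums (of_real (1 - q) * x * pser (Ms_qderiv_coeffs q b) x)"
    by (simp add: sums_Suc_iff)
  with u have "pser b x - pser b y - pser b y * x\<^sup>2 = of_real (1 - q) * x * pser (Ms_qderiv_coeffs q b) x"
    by (rule sums_unique2)
  then show ?thesis
    unfolding y_def by (simp add: algebra_simps)
qed

lemma Im_mult_q_strip: "\<bar>Im x\<bar> < 1 \<Longrightarrow> \<bar>Im (of_real q * x)\<bar> < 1"
  using q_pos q_less_1 mult_strict_mono[of q 1 "\<bar>Im x\<bar>" 1] by (simp add: abs_mult)

lemma qdiff_quotient_Ms_repr: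
  assumes G: "Ms_repr q G b" and b: "Ms_coeff_bound q s C b" and x: "\<bar>Im x\<bar> < 1" "x \<noteq> 0"
  shows "(G x - G (of_real q * x)) / ((1 - of_real q) * x) = pser (Ms_qderiv_coeffs q b) x * qgauss q x"
proof -
  have "G (of_real q * x) = pser b (of_real q * x) * ((1 + x\<^sup>2) * qgauss q x)"
    using G Im_mult_q_strip[OF x(1)] qgauss_mult_q[OF q_pos q_less_1 one_plus_square_neq_0_strip[OF x(1)]]
    unfolding Ms_repr_def by simp
  hence "G x - G (of_real q * x) = qgauss q x * (pser b x - (1 + x\<^sup>2) * pser b (of_real q * x))"
    using G x(1) unfolding Ms_repr_def by (simp add: algebra_simps)
  also have "\<dots> = ((1 - of_real q) * x) * (pser (Ms_qderiv_coeffs q b) x * qgauss q x)"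
    unfolding pser_minus_pser_mult_q[OF b] by simp
  finally show ?thesis
    using x(2) q_less_1 by simp
qed

lemma isCont_pser: "Ms_coeff_bound q s C b \<Longrightarrow> isCont (pser b) x"
  unfolding pser_def[abs_def] by (intro isCont_powser_converges_everywhere Ms_coeff_bound_summable)

lemma Ms_repr_qderiv:
  assumes G: "Ms_repr q G b" and b: "Ms_coeff_bound q s C b"
  shows "Ms_repr q (qderiv q G) (Ms_qderiv_coeffs q b)"
  unfolding Ms_repr_def
proof (intro allI impI)
  fix x :: complex
  assume x: "\<bar>Im x\<bar> < 1"
  let ?Q = "\<lambda>y. (G y - G (of_real q * y)) / ((1 - of_real q) * y)"
  let ?R = "\<lambda>y. pser (Ms_qderiv_coeffs q b) y * qgauss q y"
  show "qderiv q G x = ?R x"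
  proof (cases "x = 0")
    case False
    then show ?thesis
      using qdiff_quotient_Ms_repr[OF G b x False] by (simp add: qderiv_def)
  next
    case True
    have "eventually (\<lambda>y. y \<noteq> 0 \<and> norm y < 1) (at (0::complex))"
      by (auto simp: eventually_at intro!: exI[of _ 1])
    hence "eventually (\<lambda>y. ?R y = ?Q y) (at 0)"
      by (rule eventually_mono)
        (use qdiff_quotient_Ms_repr[OF G b] abs_Im_le_cmod le_less_trans in fastforce)
    moreover have "(?R \<longlongrightarrow> pser (Ms_qderiv_coeffs q b) 0 * 1) (at 0)"
      using isCont_pser[OF Ms_coeff_bound_qderiv[OF b], of 0] qgauss_tendsto_1[OF q_pos q_less_1]
      unfolding isCont_def by (rule tendsto_mult)
    hence "(?R \<longlongrightarrow> ?R 0) (at 0)"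
      by (simp add: qgauss_0[OF q_pos q_less_1])
    ultimately have "(?Q \<longlongrightarrow> ?R 0) (at 0)"
      by (rule Lim_transform_eventually[rotated])
    then show ?thesis
      using True by (simp add: qderiv_def tendsto_Lim)
  qed
qed

lemma Ms_repr_qderiv_iter:
  assumes "Ms_repr q G b" and "Ms_coeff_bound q s C b"
  shows "Ms_repr q ((qderiv q ^^ n) G) ((Ms_qderiv_coeffs q ^^ n) b)"
  using assms
  by (induction n) (auto intro: Ms_repr_qderiv Ms_coeff_bound_qderiv_iter)

end

section \<open>Absolutely convergent double series\<close>

lemma infsum_eq_suminf_abs:
  fixes f :: "nat \<Rightarrow> 'a::banach"
  assumes "summable (\<lambda>n. norm (f n))"
  shows "infsum f UNIV = (\<Sum>n. f n)"
  using norm_summable_imp_has_sum[OF assms summable_sums[OF summable_norm_cancel[OF assms]]]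
  by (rule infsumI)

lemma
  fixes T :: "nat \<Rightarrow> 'b \<Rightarrow> 'a::banach"
  assumes rows: "\<And>d. ((\<lambda>i. norm (T d i)) has_sum N d) A" and total: "summable N"
  shows summable_norm_column: "i \<in> A \<Longrightarrow> summable (\<lambda>d. norm (T d i))"
    and summable_on_suminf_column: "(\<lambda>i. \<Sum>d. T d i) summable_on A"
    and infsum_suminf_exchange: "infsum (\<lambda>i. \<Sum>d. T d i) A = (\<Sum>d. infsum (T d) A)"
proof -
  have "0 \<le> N d" for d
    using has_sum_nonneg[OF rows[of d]] by simp
  hence "N summable_on UNIV"
    using total by (simp add: summable_on_UNIV_nonneg_real_iff)
  hence abs_sum: "(\<lambda>(d, i). norm (T d i)) summable_on UNIV \<times> A"
    using rows by (intro summable_on_SigmaI[where g = N]) auto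
  have norm_split: "(\<lambda>x. norm ((\<lambda>(d, i). T d i) x)) = (\<lambda>(d, i). norm (T d i))"
    by auto
  have sum: "(\<lambda>(d, i). T d i) summable_on UNIV \<times> A"
    by (rule abs_summable_summable) (unfold norm_split, rule abs_sum)
  have cols: "summable (\<lambda>d. norm (T d i))" if "i \<in> A" for i
  proof -
    have "(\<lambda>(i, d). norm (T d i)) summable_on A \<times> UNIV"
      using abs_sum summable_on_swap[of "\<lambda>(d, i). norm (T d i)" UNIV A] by simp
    hence "(\<lambda>d. norm (T d i)) summable_on UNIV"
      using summable_on_SigmaD1[of "\<lambda>i d. norm (T d i)" A "\<lambda>_. UNIV", OF _ that] by simp
    then show ?thesis
      by (simp add: summable_on_UNIV_nonneg_real_iff)
  qed
  then show "i \<in> A \<Longrightarrow> summable (\<lambda>d. norm (T d i))" .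
  have inner: "infsum (\<lambda>d. T d i) UNIV = (\<Sum>d. T d i)" if "i \<in> A" for i
    by (rule infsum_eq_suminf_abs[OF cols[OF that]])
  have "(\<lambda>(i, d). T d i) summable_on A \<times> UNIV"
    using sum summable_on_swap[of "\<lambda>(d, i). T d i" UNIV A] by simp
  hence "(\<lambda>i. infsum (\<lambda>d. T d i) UNIV) summable_on A"
    by (rule summable_on_Sigma_banach)
  then show "(\<lambda>i. \<Sum>d. T d i) summable_on A"
    by (rule summable_on_cong[THEN iffD1, rotated]) (simp add: inner)
  have "norm (infsum (T d) A) \<le> N d" for d
    using norm_infsum_bound[of "T d" A] infsumI[OF rows[of d]] has_sum_imp_summable[OF rows[of d]]
    by simp
  hence "summable (\<lambda>d. norm (infsum (T d) A))"
    by (intro summable_comparison_test[OF _ total]) auto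
  hence "(\<Sum>d. infsum (T d) A) = infsum (\<lambda>d. infsum (T d) A) UNIV"
    by (rule infsum_eq_suminf_abs[symmetric])
  also have "\<dots> = infsum (\<lambda>i. infsum (\<lambda>d. T d i) UNIV) A"
    by (rule infsum_swap_banach[OF sum])
  also have "\<dots> = infsum (\<lambda>i. \<Sum>d. T d i) A"
    by (rule infsum_cong) (rule inner)
  finally show "infsum (\<lambda>i. \<Sum>d. T d i) A = (\<Sum>d. infsum (T d) A)" ..
qed

lemma suminf_swap_abs:
  fixes \<phi> :: "nat \<Rightarrow> nat \<Rightarrow> 'a::banach"
  assumes rows: "\<And>d. summable (\<lambda>n. norm (\<phi> d n))"
    and total: "summable (\<lambda>d. \<Sum>n. norm (\<phi> d n))"
  shows "(\<Sum>d. \<Sum>n. \<phi> d n) = (\<Sum>n. \<Sum>d. \<phi> d n)"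
proof -
  have has_sum: "((\<lambda>n. norm (\<phi> d n)) has_sum (\<Sum>n. norm (\<phi> d n))) UNIV" for d
    by (rule norm_summable_imp_has_sum) (use rows[of d] in \<open>auto intro: summable_sums\<close>)
  have "(\<lambda>n. \<Sum>d. \<phi> d n) sums infsum (\<lambda>n. \<Sum>d. \<phi> d n) UNIV"
    by (intro has_sum_imp_sums has_sum_infsum summable_on_suminf_column[OF has_sum total])
  also have "infsum (\<lambda>n. \<Sum>d. \<phi> d n) UNIV = (\<Sum>d. \<Sum>n. \<phi> d n)"
    using infsum_suminf_exchange[OF has_sum total] rows by (simp add: infsum_eq_suminf_abs)
  finally show ?thesis
    by (simp add: sums_iff)
qed

lemma suminf_swap_product_bound:
  fixes \<phi> :: "nat \<Rightarrow> nat \<Rightarrow> 'a::banach"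
  assumes bound: "\<And>d n. norm (\<phi> d n) \<le> A d * B n"
    and A: "summable A" and B: "summable B" and B_nonneg: "\<And>n. 0 \<le> B n"
  shows "(\<Sum>d. \<Sum>n. \<phi> d n) = (\<Sum>n. \<Sum>d. \<phi> d n)"
proof (rule suminf_swap_abs)
  show rows: "summable (\<lambda>n. norm (\<phi> d n))" for d
    by (rule summable_comparison_test[OF _ summable_mult[OF B, of "A d"]]) (use bound in auto)
  have "(\<Sum>n. norm (\<phi> d n)) \<le> A d * (\<Sum>n. B n)" for d
    using suminf_le[OF bound rows summable_mult[OF B]] by (simp add: suminf_mult[OF B])
  then show "summable (\<lambda>d. \<Sum>n. norm (\<phi> d n))"
    by (intro summable_comparison_test[OF _ summable_mult2[OF A, of "\<Sum>n. B n"]])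
      (use suminf_nonneg[OF rows] in auto)
qed

lemma sums_delay:
  fixes f :: "nat \<Rightarrow> 'a::real_normed_vector"
  assumes "f sums s"
  shows "(\<lambda>n. if d \<le> n then f (n - d) else 0) sums s"
  using assms sums_iff_shift[of "\<lambda>n. if d \<le> n then f (n - d) else 0" d s] by simp

lemma suminf_Cauchy_product_weighted:
  fixes a b u :: "nat \<Rightarrow> 'a::{banach, real_normed_div_algebra}"
  assumes a: "summable (\<lambda>d. norm (a d) * K ^ d)" and b: "summable (\<lambda>e. norm (b e) * K ^ e)"
    and u: "\<And>n. norm (u n) \<le> M * K ^ n" and K: "0 \<le> K"
  shows "(\<Sum>n. (\<Sum>d\<le>n. a d * b (n - d)) * u n) = (\<Sum>d. \<Sum>e. a d * b e * u (d + e))"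
proof -
  define \<psi> where "\<psi> d e = a d * b e * u (d + e)" for d e
  define \<phi> where "\<phi> d n = (if d \<le> n then \<psi> d (n - d) else 0)" for d n
  have "norm (\<psi> d e) \<le> norm (a d) * norm (b e) * (M * K ^ (d + e))" for d e
    unfolding \<psi>_def norm_mult by (intro mult_left_mono u) auto
  hence \<psi>_bound: "norm (\<psi> d e) \<le> (norm (a d) * K ^ d * M) * (norm (b e) * K ^ e)" for d e
    by (simp add: power_add mult_ac)
  have rows: "summable (\<lambda>e. norm (\<psi> d e))" for d
    by (rule summable_comparison_test[OF _ summable_mult[OF b]]) (use \<psi>_bound in auto)
  have "norm (\<phi> d n) = (if d \<le> n then norm (\<psi> d (n - d)) else 0)" for d n
    by (simp add: \<phi>_def)
  hence \<phi>_sums: "(\<lambda>n. \<phi> d n) sums (\<Sum>e. \<psi> d e)" "(\<lambda>n. norm (\<phi> d n)) sums (\<Sum>e. norm (\<psi> d e))"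
    for d
    using sums_delay[OF summable_sums[OF summable_norm_cancel[OF rows[of d]]], of d]
      sums_delay[OF summable_sums[OF rows[of d]], of d]
    by (simp_all only: \<phi>_def)
  have "(\<Sum>e. norm (\<psi> d e)) \<le> (norm (a d) * K ^ d * M) * (\<Sum>e. norm (b e) * K ^ e)" for d
    using suminf_le[OF \<psi>_bound rows summable_mult[OF b]] by (simp add: suminf_mult[OF b])
  hence "summable (\<lambda>d. \<Sum>n. norm (\<phi> d n))"
    using \<phi>_sums(2) suminf_nonneg[OF rows]
    by (intro summable_comparison_test[OF _ summable_mult2[OF summable_mult2[OF a, of M]]])
      (auto simp: sums_iff)
  hence "(\<Sum>d. \<Sum>n. \<phi> d n) = (\<Sum>n. \<Sum>d. \<phi> d n)"
    using \<phi>_sums(2) by (intro suminf_swap_abs) (auto simp: sums_iff)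
  moreover have "(\<Sum>d. \<phi> d n) = (\<Sum>d\<le>n. a d * b (n - d)) * u n" for n
    by (subst suminf_finite[of "{..n}"]) (auto simp: \<phi>_def \<psi>_def sum_distrib_right)
  ultimately show ?thesis
    using \<phi>_sums(1) by (simp add: sums_iff \<psi>_def)
qed

lemma summable_Cauchy_product_weighted:
  fixes a b :: "nat \<Rightarrow> 'a::real_normed_div_algebra"
  assumes a: "summable (\<lambda>d. norm (a d) * K ^ d)" and b: "summable (\<lambda>e. norm (b e) * K ^ e)"
    and K: "0 \<le> K"
  shows "summable (\<lambda>n. norm (\<Sum>d\<le>n. a d * b (n - d)) * K ^ n)"
proof (rule summable_comparison_test[OF _ sums_summable[OF Cauchy_product_sums[OF _ _]]])
  show "summable (\<lambda>d. norm (norm (a d) * K ^ d))" "summable (\<lambda>e. norm (norm (b e) * K ^ e))"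
    using a b K by simp_all
  have "norm (\<Sum>d\<le>n. a d * b (n - d)) * K ^ n \<le> (\<Sum>d\<le>n. norm (a d) * norm (b (n - d))) * K ^ n" for n
    using K by (intro mult_right_mono order.trans[OF norm_sum]) (auto simp: norm_mult)
  also have "(\<Sum>d\<le>n. norm (a d) * norm (b (n - d))) * K ^ n
      = (\<Sum>d\<le>n. norm (a d) * K ^ d * (norm (b (n - d)) * K ^ (n - d)))" for n
    unfolding sum_distrib_right by (rule sum.cong) (auto simp: power_add[symmetric] mult_ac)
  finally show "\<exists>N. \<forall>n\<ge>N. norm (norm (\<Sum>d\<le>n. a d * b (n - d)) * K ^ n)
      \<le> (\<Sum>d\<le>n. norm (a d) * K ^ d * (norm (b (n - d)) * K ^ (n - d)))"
    using K by auto
qed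

section \<open>Series of q-derivatives acting on \<open>M\<^sub>s\<close>\<close>

definition Ms_action_coeffs :: "real \<Rightarrow> (nat \<Rightarrow> complex) \<Rightarrow> (nat \<Rightarrow> complex) \<Rightarrow> nat \<Rightarrow> complex" where
  "Ms_action_coeffs q c b l = (\<Sum>e. c e * (Ms_qderiv_coeffs q ^^ e) b l)"

lemma Ms_qderiv_coeffs_iter_scale:
  "(Ms_qderiv_coeffs q ^^ d) (\<lambda>l. a * b l) = (\<lambda>l. a * (Ms_qderiv_coeffs q ^^ d) b l)"
  by (induction d) (simp_all add: Ms_qderiv_coeffs_scale)

lemma Ms_qderiv_coeffs_iter_suminf:
  assumes "\<And>d l. summable (\<lambda>e. (Ms_qderiv_coeffs q ^^ d) (b e) l)"
  shows "(Ms_qderiv_coeffs q ^^ d) (\<lambda>l. \<Sum>e. b e l) l = (\<Sum>e. (Ms_qderiv_coeffs q ^^ d) (b e) l)"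
proof (induction d arbitrary: l)
  case 0
  then show ?case
    by simp
next
  case (Suc d)
  then have "(Ms_qderiv_coeffs q ^^ d) (\<lambda>l. \<Sum>e. b e l) = (\<lambda>l. \<Sum>e. (Ms_qderiv_coeffs q ^^ d) (b e) l)"
    by auto
  then show ?case
    using Ms_qderiv_coeffs_suminf[of "\<lambda>e. (Ms_qderiv_coeffs q ^^ d) (b e)" q l] assms by simp
qed

context q_weight
begin

lemma norm_action_term_le:
  assumes "Ms_coeff_bound q s C b"
  shows "norm (c e * (Ms_qderiv_coeffs q ^^ e) b l)
    \<le> (norm (c e) * Ms_qderiv_factor q s ^ e) * (C * Ms_weight q s l)"
proof -
  have "norm ((Ms_qderiv_coeffs q ^^ e) b l) \<le> C * Ms_qderiv_factor q s ^ e * Ms_weight q s l"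
    using Ms_coeff_bound_qderiv_iter[OF assms, of e] by (simp add: Ms_coeff_bound_def)
  hence "norm (c e) * norm ((Ms_qderiv_coeffs q ^^ e) b l)
      \<le> norm (c e) * (C * Ms_qderiv_factor q s ^ e * Ms_weight q s l)"
    by (rule mult_left_mono) simp
  then show ?thesis
    by (simp add: norm_mult mult_ac)
qed

lemma summable_action_term:
  assumes "Ms_coeff_bound q s C b" and "summable (\<lambda>e. norm (c e) * Ms_qderiv_factor q s ^ e)"
  shows "summable (\<lambda>e. norm (c e * (Ms_qderiv_coeffs q ^^ e) b l))"
  by (rule summable_comparison_test[OF _ summable_mult2[OF assms(2)]])
    (use norm_action_term_le[OF assms(1)] in auto)

lemma Ms_coeff_bound_action:
  assumes b: "Ms_coeff_bound q s C b" and c: "summable (\<lambda>e. norm (c e) * Ms_qderiv_factor q s ^ e)"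
  shows "Ms_coeff_bound q s (C * (\<Sum>e. norm (c e) * Ms_qderiv_factor q s ^ e)) (Ms_action_coeffs q c b)"
  unfolding Ms_coeff_bound_def Ms_action_coeffs_def
proof
  fix l
  have "norm (\<Sum>e. c e * (Ms_qderiv_coeffs q ^^ e) b l)
      \<le> (\<Sum>e. (norm (c e) * Ms_qderiv_factor q s ^ e) * (C * Ms_weight q s l))"
    by (rule norm_suminf_le[OF norm_action_term_le[OF b, of c _ l] summable_mult2[OF c]])
  also have "\<dots> = (\<Sum>e. norm (c e) * Ms_qderiv_factor q s ^ e) * (C * Ms_weight q s l)"
    by (rule suminf_mult2[OF c, symmetric])
  finally show "norm (\<Sum>e. c e * (Ms_qderiv_coeffs q ^^ e) b l)
      \<le> C * (\<Sum>e. norm (c e) * Ms_qderiv_factor q s ^ e) * Ms_weight q s l"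
    by (simp only: mult_ac)
qed

lemma Ms_repr_action:
  assumes G: "Ms_repr q G b" and b: "Ms_coeff_bound q s C b"
    and c: "summable (\<lambda>e. norm (c e) * Ms_qderiv_factor q s ^ e)" and x: "\<bar>Im x\<bar> < 1"
  shows "summable (\<lambda>e. norm (c e * (qderiv q ^^ e) G x))"
    and "(\<Sum>e. c e * (qderiv q ^^ e) G x) = pser (Ms_action_coeffs q c b) x * qgauss q x"
proof -
  define A where "A e = norm (c e) * Ms_qderiv_factor q s ^ e" for e
  define B where "B l = C * Ms_weight q s l * norm x ^ l" for l
  define \<phi> where "\<phi> e l = c e * ((Ms_qderiv_coeffs q ^^ e) b l * x ^ l)" for e l
  have A: "summable A"
    using c by (simp add: A_def[abs_def])
  have B: "summable B"
    using summable_mult[OF Ms_weight_summable[of "norm x"], of C] by (simp add: B_def[abs_def] mult_ac)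
  have \<phi>_bound: "norm (\<phi> e l) \<le> A e * B l" for e l
    using mult_right_mono[OF norm_action_term_le[OF b, of c e l], of "norm x ^ l"]
    by (simp add: \<phi>_def A_def B_def norm_mult norm_power mult_ac)
  have B_nonneg: "0 \<le> B l" for l
    unfolding B_def using Ms_coeff_bound_nonneg[OF b] Ms_weight_pos[of l]
    by (intro mult_nonneg_nonneg) auto
  have bounds_e: "Ms_coeff_bound q s (C * Ms_qderiv_factor q s ^ e) ((Ms_qderiv_coeffs q ^^ e) b)" for e
    by (rule Ms_coeff_bound_qderiv_iter[OF b])
  have rows: "(\<Sum>l. \<phi> e l) = c e * pser ((Ms_qderiv_coeffs q ^^ e) b) x" for e
    unfolding \<phi>_def pser_def by (rule suminf_mult[OF Ms_coeff_bound_summable[OF bounds_e]])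
  have cols: "(\<Sum>e. \<phi> e l) = Ms_action_coeffs q c b l * x ^ l" for l
    unfolding \<phi>_def Ms_action_coeffs_def
    using suminf_mult2[OF summable_norm_cancel[OF summable_action_term[OF b c]], of l "x ^ l"]
    by (simp add: mult_ac)
  have "norm (c e * pser ((Ms_qderiv_coeffs q ^^ e) b) x) \<le> A e * (\<Sum>l. B l)" for e
    using norm_suminf_le[OF \<phi>_bound summable_mult[OF B]] by (simp add: rows suminf_mult[OF B])
  hence pser_summable: "summable (\<lambda>e. norm (c e * pser ((Ms_qderiv_coeffs q ^^ e) b) x))"
    by (intro summable_comparison_test[OF _ summable_mult2[OF A]]) auto
  have Gx: "(qderiv q ^^ e) G x = pser ((Ms_qderiv_coeffs q ^^ e) b) x * qgauss q x" for e
    using Ms_repr_qderiv_iter[OF G b, of e] x unfolding Ms_repr_def by blast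
  show "summable (\<lambda>e. norm (c e * (qderiv q ^^ e) G x))"
    unfolding Gx using summable_mult2[OF pser_summable, of "norm (qgauss q x)"]
    by (simp add: norm_mult mult_ac)
  have "(\<Sum>e. c e * (qderiv q ^^ e) G x) = (\<Sum>e. c e * pser ((Ms_qderiv_coeffs q ^^ e) b) x) * qgauss q x"
    unfolding Gx using suminf_mult2[OF summable_norm_cancel[OF pser_summable], of "qgauss q x"]
    by (simp add: mult_ac)
  also have "(\<Sum>e. c e * pser ((Ms_qderiv_coeffs q ^^ e) b) x) = (\<Sum>l. Ms_action_coeffs q c b l * x ^ l)"
    using suminf_swap_product_bound[OF \<phi>_bound A B B_nonneg] unfolding rows cols .
  finally show "(\<Sum>e. c e * (qderiv q ^^ e) G x) = pser (Ms_action_coeffs q c b) x * qgauss q x"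
    unfolding pser_def .
qed

lemma Ms_qderiv_coeffs_iter_comm:
  "(Ms_qderiv_coeffs q ^^ e) ((Ms_qderiv_coeffs q ^^ d) a) = (Ms_qderiv_coeffs q ^^ (d + e)) a"
  by (subst add.commute) (simp add: funpow_add)

lemma summable_action_term_shifted:
  assumes "Ms_coeff_bound q s C a" and "summable (\<lambda>e. norm (c e) * Ms_qderiv_factor q s ^ e)"
  shows "summable (\<lambda>e. c e * (Ms_qderiv_coeffs q ^^ (d + e)) a l)"
  using summable_action_term[OF Ms_coeff_bound_qderiv_iter[OF assms(1), of d] assms(2), of l]
  unfolding Ms_qderiv_coeffs_iter_comm by (rule summable_norm_cancel)

lemma Ms_qderiv_coeffs_iter_action:
  assumes a: "Ms_coeff_bound q s C a" and c: "summable (\<lambda>e. norm (c e) * Ms_qderiv_factor q s ^ e)"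
  shows "(Ms_qderiv_coeffs q ^^ d) (Ms_action_coeffs q c a) l
    = (\<Sum>e. c e * (Ms_qderiv_coeffs q ^^ (d + e)) a l)"
proof -
  have shift: "(Ms_qderiv_coeffs q ^^ d) (\<lambda>l. c e * (Ms_qderiv_coeffs q ^^ e) a l) l
      = c e * (Ms_qderiv_coeffs q ^^ (d + e)) a l" for d e l
    by (simp add: Ms_qderiv_coeffs_iter_scale funpow_add)
  have "(Ms_qderiv_coeffs q ^^ d) (\<lambda>l. \<Sum>e. c e * (Ms_qderiv_coeffs q ^^ e) a l) l
      = (\<Sum>e. (Ms_qderiv_coeffs q ^^ d) (\<lambda>l. c e * (Ms_qderiv_coeffs q ^^ e) a l) l)"
    by (rule Ms_qderiv_coeffs_iter_suminf) (simp only: shift summable_action_term_shifted[OF a c])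
  then show ?thesis
    unfolding Ms_action_coeffs_def shift .
qed

lemma Ms_action_coeffs_action:
  assumes a: "Ms_coeff_bound q s C a"
    and cA: "summable (\<lambda>e. norm (cA e) * Ms_qderiv_factor q s ^ e)"
    and cB: "summable (\<lambda>e. norm (cB e) * Ms_qderiv_factor q s ^ e)"
  shows "Ms_action_coeffs q cA (Ms_action_coeffs q cB a) l
    = (\<Sum>d. \<Sum>e. cA d * cB e * (Ms_qderiv_coeffs q ^^ (d + e)) a l)"
proof -
  have "cA d * (\<Sum>e. cB e * (Ms_qderiv_coeffs q ^^ (d + e)) a l)
      = (\<Sum>e. cA d * (cB e * (Ms_qderiv_coeffs q ^^ (d + e)) a l))" for d
    by (rule suminf_mult[OF summable_action_term_shifted[OF a cB], symmetric])
  then show ?thesis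
    unfolding Ms_action_coeffs_def[of q cA] Ms_qderiv_coeffs_iter_action[OF a cB] mult.assoc
    by (rule suminf_cong)
qed

lemma Ms_action_coeffs_commute:
  assumes a: "Ms_coeff_bound q s C a"
    and cA: "summable (\<lambda>e. norm (cA e) * Ms_qderiv_factor q s ^ e)"
    and cB: "summable (\<lambda>e. norm (cB e) * Ms_qderiv_factor q s ^ e)"
  shows "Ms_action_coeffs q cA (Ms_action_coeffs q cB a) = Ms_action_coeffs q cB (Ms_action_coeffs q cA a)"
proof
  fix l
  have "norm (cA d * cB e * (Ms_qderiv_coeffs q ^^ (d + e)) a l)
      \<le> (norm (cA d) * Ms_qderiv_factor q s ^ d)
        * ((norm (cB e) * Ms_qderiv_factor q s ^ e) * (C * Ms_weight q s l))" for d e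
    using norm_action_term_le[OF a, of "\<lambda>_. cA d * cB e" "d + e" l]
    by (simp add: norm_mult power_add mult_ac)
  hence "(\<Sum>d. \<Sum>e. cA d * cB e * (Ms_qderiv_coeffs q ^^ (d + e)) a l)
      = (\<Sum>e. \<Sum>d. cA d * cB e * (Ms_qderiv_coeffs q ^^ (d + e)) a l)"
    using Ms_coeff_bound_nonneg[OF a] Ms_weight_pos[of l] Ms_qderiv_factor_pos
    by (intro suminf_swap_product_bound[OF _ cA summable_mult2[OF cB]]) auto
  then show "Ms_action_coeffs q cA (Ms_action_coeffs q cB a) l
      = Ms_action_coeffs q cB (Ms_action_coeffs q cA a) l"
    unfolding Ms_action_coeffs_action[OF a cA cB] Ms_action_coeffs_action[OF a cB cA]
    by (simp add: add.commute mult_ac)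
qed

lemma Ms_action_coeffs_Cauchy_product:
  assumes a: "Ms_coeff_bound q s C a"
    and cA: "summable (\<lambda>e. norm (cA e) * Ms_qderiv_factor q s ^ e)"
    and cB: "summable (\<lambda>e. norm (cB e) * Ms_qderiv_factor q s ^ e)"
  shows "Ms_action_coeffs q (\<lambda>n. \<Sum>d\<le>n. cA d * cB (n - d)) a = Ms_action_coeffs q cA (Ms_action_coeffs q cB a)"
proof
  fix l
  have "norm ((Ms_qderiv_coeffs q ^^ n) a l) \<le> (C * Ms_weight q s l) * Ms_qderiv_factor q s ^ n" for n
    using Ms_coeff_bound_qderiv_iter[OF a, of n] by (simp add: Ms_coeff_bound_def mult_ac)
  then show "Ms_action_coeffs q (\<lambda>n. \<Sum>d\<le>n. cA d * cB (n - d)) a l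
      = Ms_action_coeffs q cA (Ms_action_coeffs q cB a) l"
    unfolding Ms_action_coeffs_action[OF a cA cB]
    unfolding Ms_action_coeffs_def
    by (rule suminf_Cauchy_product_weighted[OF cA cB]) (use Ms_qderiv_factor_pos in auto)
qed

end

abbreviation lattice_index :: "(int \<times> real) set" where
  "lattice_index \<equiv> UNIV \<times> {-1, 1}"

lemma int_UNIV_eq_nonneg_neg: "(UNIV :: int set) = range int \<union> range (\<lambda>n. - int n - 1)"
proof -
  have "k \<in> range int \<union> range (\<lambda>n. - int n - 1)" for k :: int
  proof (cases "0 \<le> k")
    case True
    then have "k = int (nat k)"
      by simp
    then show ?thesis
      by blast
  next
    case False
    then have "k = - int (nat (- k - 1)) - 1"
      by simp
    then show ?thesis
      by blast
  qed
  then show ?thesis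
    by blast
qed

lemma summable_on_int_iff:
  fixes g :: "int \<Rightarrow> 'a::banach"
  shows "(\<lambda>k. norm (g k)) summable_on UNIV \<longleftrightarrow>
    summable (\<lambda>n. norm (g (int n))) \<and> summable (\<lambda>n. norm (g (- int n - 1)))"
proof -
  have inj: "inj (\<lambda>n::nat. - int n - 1)"
    by (auto simp: inj_def)
  have pos: "(\<lambda>k. norm (g k)) summable_on range int \<longleftrightarrow> summable (\<lambda>n. norm (g (int n)))"
    by (subst summable_on_reindex) (auto simp: o_def summable_on_UNIV_nonneg_real_iff)
  have neg: "(\<lambda>k. norm (g k)) summable_on range (\<lambda>n. - int n - 1)
      \<longleftrightarrow> summable (\<lambda>n. norm (g (- int n - 1)))"
    by (subst summable_on_reindex[OF inj]) (auto simp: o_def summable_on_UNIV_nonneg_real_iff)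
  show ?thesis
  proof
    assume "(\<lambda>k. norm (g k)) summable_on UNIV"
    then show "summable (\<lambda>n. norm (g (int n))) \<and> summable (\<lambda>n. norm (g (- int n - 1)))"
      unfolding pos[symmetric] neg[symmetric] by (auto elim: summable_on_subset_banach)
  next
    assume "summable (\<lambda>n. norm (g (int n))) \<and> summable (\<lambda>n. norm (g (- int n - 1)))"
    then have "(\<lambda>k. norm (g k)) summable_on (range int \<union> range (\<lambda>n. - int n - 1))"
      using pos neg by (intro summable_on_Un_disjoint) auto
    then show "(\<lambda>k. norm (g k)) summable_on UNIV"
      by (simp flip: int_UNIV_eq_nonneg_neg)
  qed
qed

lemma infsum_int_split:
  fixes g :: "int \<Rightarrow> 'a::banach"
  assumes "(\<lambda>k. norm (g k)) summable_on UNIV"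
  shows "infsum g UNIV = (\<Sum>n. g (int n)) + (\<Sum>n. g (- int n - 1))"
proof -
  have inj: "inj (\<lambda>n::nat. - int n - 1)"
    by (auto simp: inj_def)
  have g: "g summable_on A" for A
    by (rule summable_on_subset_banach[OF abs_summable_summable[OF assms]]) auto
  have "infsum g UNIV = infsum g (range int) + infsum g (range (\<lambda>n. - int n - 1))"
    by (subst int_UNIV_eq_nonneg_neg, rule infsum_Un_disjoint[OF g g]) auto
  also have "infsum g (range int) = (\<Sum>n. g (int n))"
    using assms unfolding summable_on_int_iff
    by (subst infsum_reindex) (auto simp: o_def intro: infsum_eq_suminf_abs)
  also have "infsum g (range (\<lambda>n. - int n - 1)) = (\<Sum>n. g (- int n - 1))"
    using assms unfolding summable_on_int_iff
    by (subst infsum_reindex[OF inj]) (auto simp: o_def intro: infsum_eq_suminf_abs)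
  finally show ?thesis .
qed

lemma lattice_index_eq: "lattice_index = range (\<lambda>k. (k, 1)) \<union> range (\<lambda>k. (k, -1))"
  by auto

lemma summable_on_lattice_index_iff:
  fixes f :: "int \<times> real \<Rightarrow> 'a::banach"
  shows "(\<lambda>i. norm (f i)) summable_on lattice_index \<longleftrightarrow>
    (\<lambda>k. norm (f (k, 1))) summable_on UNIV \<and> (\<lambda>k. norm (f (k, -1))) summable_on UNIV"
proof -
  have inj: "inj (\<lambda>k::int. (k, 1::real))" "inj (\<lambda>k::int. (k, -1::real))"
    by (auto simp: inj_def)
  have pos: "(\<lambda>i. norm (f i)) summable_on range (\<lambda>k. (k, 1)) \<longleftrightarrow> (\<lambda>k. norm (f (k, 1))) summable_on UNIV"
    and neg: "(\<lambda>i. norm (f i)) summable_on range (\<lambda>k. (k, -1)) \<longleftrightarrow> (\<lambda>k. norm (f (k, -1))) summable_on UNIV"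
    by (simp_all add: summable_on_reindex[OF inj(1)] summable_on_reindex[OF inj(2)] o_def)
  show ?thesis
  proof
    assume "(\<lambda>i. norm (f i)) summable_on lattice_index"
    then show "(\<lambda>k. norm (f (k, 1))) summable_on UNIV \<and> (\<lambda>k. norm (f (k, -1))) summable_on UNIV"
      unfolding pos[symmetric] neg[symmetric] by (auto elim: summable_on_subset_banach)
  next
    assume "(\<lambda>k. norm (f (k, 1))) summable_on UNIV \<and> (\<lambda>k. norm (f (k, -1))) summable_on UNIV"
    then have "(\<lambda>i. norm (f i)) summable_on (range (\<lambda>k. (k, 1)) \<union> range (\<lambda>k. (k, -1)))"
      using pos neg by (intro summable_on_Un_disjoint) auto
    then show "(\<lambda>i. norm (f i)) summable_on lattice_index"
      by (simp only: lattice_index_eq)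
  qed
qed

lemma infsum_lattice_index_split:
  fixes f :: "int \<times> real \<Rightarrow> 'a::banach"
  assumes "(\<lambda>i. norm (f i)) summable_on lattice_index"
  shows "infsum f lattice_index = infsum (\<lambda>k. f (k, 1)) UNIV + infsum (\<lambda>k. f (k, -1)) UNIV"
proof -
  have inj: "inj (\<lambda>k::int. (k, 1::real))" "inj (\<lambda>k::int. (k, -1::real))"
    by (auto simp: inj_def)
  have f: "f summable_on A" if "A \<subseteq> lattice_index" for A
    by (rule summable_on_subset_banach[OF abs_summable_summable[OF assms] that])
  have "infsum f lattice_index = infsum f (range (\<lambda>k. (k, 1))) + infsum f (range (\<lambda>k. (k, -1)))"
    by (subst lattice_index_eq, rule infsum_Un_disjoint[OF f f]) auto
  then show ?thesis
    by (simp add: infsum_reindex[OF inj(1)] infsum_reindex[OF inj(2)] o_def)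
qed

definition lattice_shift :: "int \<times> real \<Rightarrow> int \<times> real" where
  "lattice_shift i = (fst i + 1, snd i)"

lemma bij_betw_lattice_shift: "bij_betw lattice_shift lattice_index lattice_index"
  by (rule bij_betw_byWitness[where f' = "\<lambda>i. (fst i - 1, snd i)"])
    (auto simp: lattice_shift_def image_def)

lemma summable_on_lattice_shift_iff:
  "(\<lambda>i. f (lattice_shift i)) summable_on lattice_index \<longleftrightarrow> f summable_on lattice_index"
  by (rule summable_on_reindex_bij_betw[OF bij_betw_lattice_shift])

lemma infsum_lattice_shift:
  "infsum (\<lambda>i. f (lattice_shift i)) lattice_index = infsum f lattice_index"
  by (rule infsum_reindex_bij_betw[OF bij_betw_lattice_shift])

section \<open>Functions with Taylor expansions on the lattice\<close>

definition lattice_pt :: "real \<Rightarrow> real \<Rightarrow> int \<Rightarrow> real \<Rightarrow> complex" where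
  "lattice_pt q \<gamma> k \<epsilon> = complex_of_real (\<epsilon> * q powi k * \<gamma>)"

definition moment_term :: "real \<Rightarrow> real \<Rightarrow> (complex \<Rightarrow> complex) \<Rightarrow> nat \<Rightarrow> int \<times> real \<Rightarrow> complex" where
  "moment_term q \<gamma> \<phi> m = qint_term q \<gamma> (\<lambda>x. \<phi> x * x ^ m)"

definition lattice_taylor ::
    "real \<Rightarrow> real \<Rightarrow> (complex \<Rightarrow> complex) \<Rightarrow> (nat \<Rightarrow> complex) \<Rightarrow> real \<Rightarrow> real \<Rightarrow> bool" where
  "lattice_taylor q \<gamma> \<phi> b \<rho> B \<longleftrightarrow> \<gamma> < \<rho> \<and> 0 \<le> B \<and> (\<forall>n. norm (b n) \<le> B / \<rho> ^ n) \<and>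
     (\<forall>k::nat. \<forall>\<epsilon>\<in>{-1, 1}. (\<lambda>n. b n * lattice_pt q \<gamma> (int k) \<epsilon> ^ n) sums \<phi> (lattice_pt q \<gamma> (int k) \<epsilon>))"

definition pser_qderiv_coeffs :: "real \<Rightarrow> (nat \<Rightarrow> complex) \<Rightarrow> nat \<Rightarrow> complex" where
  "pser_qderiv_coeffs q b n = of_real (qnum q (Suc n)) * b (Suc n)"

lemma sums_pser_qderiv_coeffs:
  assumes u: "(\<lambda>n. b n * x ^ n) sums u" and v: "(\<lambda>n. b n * (of_real q * x) ^ n) sums v"
    and x: "x \<noteq> 0" and q: "q \<noteq> 1"
  shows "(\<lambda>n. pser_qderiv_coeffs q b n * x ^ n) sums ((u - v) / ((1 - of_real q) * x))"
proof -
  have q': "1 - complex_of_real q \<noteq> 0"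
    using q by (metis eq_iff_diff_eq_0 of_real_1 of_real_eq_iff)
  define t where "t n = (b n * x ^ n - b n * (of_real q * x) ^ n) / ((1 - of_real q) * x)" for n
  have "t sums ((u - v) / ((1 - of_real q) * x))"
    unfolding t_def using u v by (intro sums_divide sums_diff)
  moreover have "t (Suc n) = pser_qderiv_coeffs q b n * x ^ n" for n
  proof -
    have "t (Suc n) = b (Suc n) * x ^ n * ((1 - of_real q ^ Suc n) / (1 - of_real q))"
      using x q' by (simp add: t_def power_mult_distrib field_simps)
    also have "(1 - complex_of_real q ^ Suc n) / (1 - of_real q) = of_real (qnum q (Suc n))"
      by (simp add: qnum_def)
    finally show ?thesis
      by (simp add: pser_qderiv_coeffs_def mult_ac)
  qed
  moreover have "t 0 = 0"
    by (simp add: t_def)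
  ultimately show ?thesis
    using sums_Suc_iff[of t] by simp
qed

lemma powser_coeff_bound:
  assumes "summable (\<lambda>n. b n * complex_of_real \<rho> ^ n)" and "0 < \<rho>"
  obtains B where "0 < B" and "\<And>n. norm (b n) \<le> B / \<rho> ^ n"
proof -
  have "Bseq (\<lambda>n. b n * of_real \<rho> ^ n)"
    using assms(1) by (intro convergent_imp_Bseq) (auto simp: convergent_def dest: summable_LIMSEQ_zero)
  then obtain B where B: "0 < B" "\<And>n. norm (b n * of_real \<rho> ^ n) \<le> B"
    by (auto elim: BseqE)
  have "norm (b n) \<le> B / \<rho> ^ n" for n
    using B(2)[of n] assms(2) by (simp add: norm_mult norm_power field_simps)
  with B(1) show ?thesis
    by (rule that)
qed

lemma I_inf_iff_moment_term:
  "\<phi> \<in> I_inf q \<gamma> \<longleftrightarrow> (\<forall>m. (\<lambda>i. norm (moment_term q \<gamma> \<phi> m i)) summable_on lattice_index)"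
  by (simp add: I_inf_def moment_term_def)

lemma qmoment_eq_moment_term:
  "qmoment q \<gamma> m \<phi> = of_real (q ^ ((m\<^sup>2 + m) div 2)) * (of_real (1 - q) * infsum (moment_term q \<gamma> \<phi> m) lattice_index)"
  by (simp add: qmoment_def qint_def moment_term_def)

context q_param
begin

lemma q_powi_pos: "0 < q powi k"
  using q_pos by (simp add: power_int_def)

lemma q_powi_le_1: "0 \<le> k \<Longrightarrow> q powi k \<le> 1"
  using q_pos q_less_1 by (simp add: power_int_def power_le_one)

lemma q_powi_ge_1: "k < 0 \<Longrightarrow> 1 \<le> q powi k"
  using q_pos q_less_1 power_le_one[of q "nat (- k)"]
  by (simp add: power_int_def power_inverse one_le_inverse)

lemma one_minus_q_neq_0: "1 - complex_of_real q \<noteq> 0"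
  using q_less_1 by (metis eq_iff_diff_eq_0 of_real_1 of_real_eq_iff less_irrefl)

end

locale q_lattice = q_param +
  fixes \<gamma> :: real
  assumes gamma_pos: "0 < \<gamma>"
begin

lemma moment_term_eq:
  "moment_term q \<gamma> \<phi> m (k, \<epsilon>)
    = of_real (q powi k * \<gamma>) * (\<phi> (lattice_pt q \<gamma> k \<epsilon>) * lattice_pt q \<gamma> k \<epsilon> ^ m)"
  by (simp add: moment_term_def qint_term_def lattice_pt_def)

lemma norm_lattice_pt: "\<epsilon> \<in> {-1, 1} \<Longrightarrow> norm (lattice_pt q \<gamma> k \<epsilon>) = q powi k * \<gamma>"
  unfolding lattice_pt_def norm_of_real using q_powi_pos[of k] gamma_pos by (auto simp: abs_mult)

lemma lattice_pt_neq_0: "\<epsilon> \<in> {-1, 1} \<Longrightarrow> lattice_pt q \<gamma> k \<epsilon> \<noteq> 0"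
  unfolding lattice_pt_def of_real_eq_0_iff using q_powi_pos[of k] gamma_pos q_pos by auto

lemma mult_q_lattice_pt: "of_real q * lattice_pt q \<gamma> k \<epsilon> = lattice_pt q \<gamma> (k + 1) \<epsilon>"
  using q_pos by (simp add: lattice_pt_def power_int_add_1 mult_ac)

lemma qderiv_lattice_pt:
  assumes "\<epsilon> \<in> {-1, 1}"
  shows "qderiv q \<phi> (lattice_pt q \<gamma> k \<epsilon>)
    = (\<phi> (lattice_pt q \<gamma> k \<epsilon>) - \<phi> (lattice_pt q \<gamma> (k + 1) \<epsilon>)) / ((1 - of_real q) * lattice_pt q \<gamma> k \<epsilon>)"
  using lattice_pt_neq_0[OF assms, of k] by (simp add: qderiv_def mult_q_lattice_pt)

lemma lattice_taylor_qderiv: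
  assumes \<phi>: "lattice_taylor q \<gamma> \<phi> b \<rho> B"
  shows "lattice_taylor q \<gamma> (qderiv q \<phi>) (pser_qderiv_coeffs q b) \<rho> (B / ((1 - q) * \<rho>))"
proof -
  have \<rho>: "\<gamma> < \<rho>" "0 \<le> B" "\<And>n. norm (b n) \<le> B / \<rho> ^ n"
    using \<phi> by (auto simp: lattice_taylor_def)
  have bound: "norm (pser_qderiv_coeffs q b n) \<le> B / ((1 - q) * \<rho>) / \<rho> ^ n" for n
  proof -
    have "norm (pser_qderiv_coeffs q b n) = qnum q (Suc n) * norm (b (Suc n))"
      using qnum_nonneg[OF q_pos q_less_1] by (simp add: pser_qderiv_coeffs_def norm_mult)
    also have "\<dots> \<le> (1 / (1 - q)) * (B / \<rho> ^ Suc n)"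
      using qnum_le[OF q_pos q_less_1] qnum_nonneg[OF q_pos q_less_1] \<rho>(3)[of "Suc n"] q_less_1
      by (intro mult_mono) auto
    finally show ?thesis
      by (simp add: field_simps)
  qed
  have sums: "(\<lambda>n. pser_qderiv_coeffs q b n * x ^ n) sums qderiv q \<phi> x"
    if \<epsilon>: "\<epsilon> \<in> {-1, 1}" and x: "x = lattice_pt q \<gamma> (int k) \<epsilon>" for k \<epsilon> x
  proof -
    have qx: "of_real q * x = lattice_pt q \<gamma> (int (Suc k)) \<epsilon>"
      unfolding x mult_q_lattice_pt by (simp add: add.commute)
    have "(\<lambda>n. b n * x ^ n) sums \<phi> x" "(\<lambda>n. b n * (of_real q * x) ^ n) sums \<phi> (of_real q * x)"
      using \<phi> \<epsilon> unfolding lattice_taylor_def qx unfolding x by blast+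
    from sums_pser_qderiv_coeffs[OF this lattice_pt_neq_0[OF \<epsilon>, of "int k", folded x]] q_less_1
    show ?thesis
      unfolding x qderiv_lattice_pt[OF \<epsilon>] qx[unfolded x] by (simp add: add.commute)
  qed
  show ?thesis
    unfolding lattice_taylor_def using \<rho> bound sums gamma_pos q_less_1
    by (auto intro!: divide_nonneg_pos)
qed

lemma norm_lattice_taylor_le:
  assumes \<phi>: "lattice_taylor q \<gamma> \<phi> b \<rho> B" and \<epsilon>: "\<epsilon> \<in> {-1, 1}"
  shows "norm (\<phi> (lattice_pt q \<gamma> (int k) \<epsilon>)) \<le> B * \<rho> / (\<rho> - \<gamma>)"
proof -
  have \<rho>: "\<gamma> < \<rho>" "0 \<le> B" "\<And>n. norm (b n) \<le> B / \<rho> ^ n"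
    using \<phi> by (auto simp: lattice_taylor_def)
  define x where "x = lattice_pt q \<gamma> (int k) \<epsilon>"
  have "norm x \<le> \<gamma>"
    unfolding x_def norm_lattice_pt[OF \<epsilon>]
    using q_powi_le_1[of "int k"] gamma_pos by (simp add: mult_left_le_one_le)
  hence "norm (b n * x ^ n) \<le> (B / \<rho> ^ n) * \<gamma> ^ n" for n
    unfolding norm_mult norm_power using \<rho> gamma_pos
    by (intro mult_mono power_mono) auto
  hence term_le: "norm (b n * x ^ n) \<le> B * (\<gamma> / \<rho>) ^ n" for n
    by (simp add: power_divide)
  have ratio: "\<gamma> / \<rho> < 1" "0 \<le> \<gamma> / \<rho>"
    using \<rho> gamma_pos by auto
  have "(\<lambda>n. b n * x ^ n) sums \<phi> x"
    using \<phi> \<epsilon> unfolding lattice_taylor_def x_def by blast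
  hence "norm (\<phi> x) = norm (\<Sum>n. b n * x ^ n)"
    by (simp add: sums_iff)
  also have "\<dots> \<le> (\<Sum>n. B * (\<gamma> / \<rho>) ^ n)"
    using ratio by (intro norm_suminf_le[OF term_le] summable_mult summable_geometric) auto
  also have "\<dots> = B * (1 / (1 - \<gamma> / \<rho>))"
    using ratio by (simp add: suminf_mult suminf_geometric)
  also have "\<dots> = B * \<rho> / (\<rho> - \<gamma>)"
    using \<rho> gamma_pos by (simp add: field_simps)
  finally show ?thesis
    unfolding x_def .
qed

lemma lattice_taylor_tendsto:
  assumes \<phi>: "lattice_taylor q \<gamma> \<phi> b \<rho> B" and \<epsilon>: "\<epsilon> \<in> {-1, 1}"
  shows "(\<lambda>k. \<phi> (lattice_pt q \<gamma> (int k) \<epsilon>)) \<longlonglongrightarrow> b 0"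
proof -
  have \<rho>: "\<gamma> < \<rho>" "0 \<le> B" "\<And>n. norm (b n) \<le> B / \<rho> ^ n"
    using \<phi> by (auto simp: lattice_taylor_def)
  define P where "P z = (\<Sum>n. b n * z ^ n)" for z
  have "norm (b n * of_real \<gamma> ^ n) \<le> (B / \<rho> ^ n) * \<gamma> ^ n" for n
    unfolding norm_mult norm_power using \<rho>(2,3) gamma_pos \<rho>(1) by (intro mult_mono) auto
  hence bound: "norm (b n * of_real \<gamma> ^ n) \<le> B * (\<gamma> / \<rho>) ^ n" for n
    by (simp add: power_divide)
  have "summable (\<lambda>n. B * (\<gamma> / \<rho>) ^ n)"
    using \<rho>(1) gamma_pos by (intro summable_mult summable_geometric) auto
  hence "summable (\<lambda>n. b n * of_real \<gamma> ^ n)"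
    by (rule summable_norm_cancel[OF summable_comparison_test']) (use bound in simp)
  hence "isCont P 0"
    unfolding P_def[abs_def] by (rule isCont_powser) (use gamma_pos in simp)
  moreover have "(\<lambda>k. q ^ k) \<longlonglongrightarrow> 0"
    using q_pos q_less_1 by (intro LIMSEQ_power_zero) simp
  hence "(\<lambda>k. complex_of_real (\<epsilon> * q ^ k * \<gamma>)) \<longlonglongrightarrow> of_real (\<epsilon> * 0 * \<gamma>)"
    by (intro tendsto_of_real tendsto_mult_left tendsto_mult_right)
  hence "(\<lambda>k. lattice_pt q \<gamma> (int k) \<epsilon>) \<longlonglongrightarrow> 0"
    by (simp add: lattice_pt_def)
  ultimately have "(\<lambda>k. P (lattice_pt q \<gamma> (int k) \<epsilon>)) \<longlonglongrightarrow> P 0"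
    by (rule isCont_tendsto_compose)
  moreover have "P (lattice_pt q \<gamma> (int k) \<epsilon>) = \<phi> (lattice_pt q \<gamma> (int k) \<epsilon>)" for k
    using \<phi> \<epsilon> unfolding lattice_taylor_def P_def by (metis sums_unique)
  ultimately show ?thesis
    by (simp add: P_def powser_zero)
qed

lemma HD_I_E_lattice_taylor:
  assumes f: "f \<in> HD_I_E q \<gamma>"
  obtains b \<rho> B where "lattice_taylor q \<gamma> f b \<rho> B"
proof -
  obtain r h where inb: "\<forall>k::nat. \<forall>\<epsilon>\<in>{-1, 1::real}. complex_of_real (\<epsilon> * q ^ k * \<gamma>) \<in> ball 0 r"
    and hol: "h holomorphic_on ball 0 r" and eq: "\<forall>x \<in> qlattice q \<gamma> \<inter> ball 0 r. h x = f x"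
    using f unfolding HD_I_E_def by blast
  have "complex_of_real (1 * q ^ 0 * \<gamma>) \<in> ball 0 r"
    using inb by blast
  hence "\<gamma> < r"
    using gamma_pos by simp
  define \<rho> where "\<rho> = (\<gamma> + r) / 2"
  have \<rho>: "\<gamma> < \<rho>" "\<rho> < r" "0 < \<rho>"
    using \<open>\<gamma> < r\<close> gamma_pos by (auto simp: \<rho>_def)
  define b where "b n = (deriv ^^ n) h 0 / fact n" for n
  have ps: "(\<lambda>n. b n * w ^ n) sums h w" if "w \<in> ball 0 r" for w
    using holomorphic_power_series[OF hol that] by (simp add: b_def)
  have "summable (\<lambda>n. b n * of_real \<rho> ^ n)"
    using ps[of "of_real \<rho>"] \<rho> by (auto simp: sums_iff)
  then obtain B where B: "0 < B" "\<And>n. norm (b n) \<le> B / \<rho> ^ n"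
    using powser_coeff_bound \<rho>(3) by blast
  moreover have "(\<lambda>n. b n * lattice_pt q \<gamma> (int k) \<epsilon> ^ n) sums f (lattice_pt q \<gamma> (int k) \<epsilon>)"
    if \<epsilon>: "\<epsilon> \<in> {-1, 1}" for k \<epsilon>
  proof -
    have "lattice_pt q \<gamma> (int k) \<epsilon> = complex_of_real (\<epsilon> * q ^ k * \<gamma>)"
      by (simp add: lattice_pt_def)
    hence "lattice_pt q \<gamma> (int k) \<epsilon> \<in> ball 0 r"
      using inb \<epsilon> by (simp only:)
    moreover have "lattice_pt q \<gamma> (int k) \<epsilon> \<in> qlattice q \<gamma>"
      unfolding qlattice_def lattice_pt_def using \<epsilon> by blast
    ultimately show ?thesis
      using ps eq by (metis IntI)
  qed
  then show ?thesis
    using that[of b \<rho> B] \<rho> B by (auto simp: lattice_taylor_def)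
qed

end

section \<open>Moments of q-derivatives\<close>

definition moment_abs :: "real \<Rightarrow> real \<Rightarrow> (complex \<Rightarrow> complex) \<Rightarrow> nat \<Rightarrow> real" where
  "moment_abs q \<gamma> \<phi> m = infsum (\<lambda>i. norm (moment_term q \<gamma> \<phi> m i)) lattice_index"

definition geom_majorant :: "real \<Rightarrow> real \<Rightarrow> nat \<Rightarrow> int \<times> real \<Rightarrow> real" where
  "geom_majorant q \<gamma> m i = (if 0 \<le> fst i then q powi fst i * \<gamma> ^ Suc m else 0)"

context q_lattice
begin

lemma moment_abs_nonneg: "0 \<le> moment_abs q \<gamma> \<phi> m"
  unfolding moment_abs_def by (rule infsum_nonneg) simp

lemma geom_majorant_nonneg: "0 \<le> geom_majorant q \<gamma> m i"
  using q_powi_pos gamma_pos by (simp add: geom_majorant_def less_imp_le)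

lemma summable_on_geom_majorant: "geom_majorant q \<gamma> m summable_on lattice_index"
proof -
  have "(\<lambda>k. norm (geom_majorant q \<gamma> m (k, \<epsilon>))) summable_on UNIV" for \<epsilon>
    unfolding summable_on_int_iff
    using q_pos q_less_1 gamma_pos by (simp add: geom_majorant_def summable_mult2 summable_geometric)
  hence "(\<lambda>i. norm (geom_majorant q \<gamma> m i)) summable_on lattice_index"
    using summable_on_lattice_index_iff[of "geom_majorant q \<gamma> m"] by blast
  then show ?thesis
    using geom_majorant_nonneg by simp
qed

lemma norm_moment_term_qderiv_le_inner:
  assumes \<phi>: "lattice_taylor q \<gamma> \<phi> b \<rho> B" and \<epsilon>: "\<epsilon> \<in> {-1, 1}" and k: "0 \<le> k"
  shows "norm (moment_term q \<gamma> (qderiv q \<phi>) m (k, \<epsilon>)) \<le> B / ((1 - q) * (\<rho> - \<gamma>)) * geom_majorant q \<gamma> m (k, \<epsilon>)"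
proof -
  define a where "a = q powi k * \<gamma>"
  have a: "0 < a" "a \<le> \<gamma>"
    using q_powi_pos[of k] q_powi_le_1[OF k] gamma_pos by (auto simp: a_def mult_left_le_one_le)
  obtain n where n: "k = int n"
    using k nonneg_eq_int by blast
  have \<rho>: "\<gamma> < \<rho>" "0 \<le> B"
    using \<phi> by (auto simp: lattice_taylor_def)
  have "norm (qderiv q \<phi> (lattice_pt q \<gamma> k \<epsilon>)) \<le> B / ((1 - q) * \<rho>) * \<rho> / (\<rho> - \<gamma>)"
    using norm_lattice_taylor_le[OF lattice_taylor_qderiv[OF \<phi>] \<epsilon>, of n] by (simp add: n)
  also have "\<dots> = B / ((1 - q) * (\<rho> - \<gamma>))"
    using \<rho> gamma_pos q_less_1 by (simp add: divide_divide_eq_left)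
  finally have "norm (qderiv q \<phi> (lattice_pt q \<gamma> k \<epsilon>)) \<le> B / ((1 - q) * (\<rho> - \<gamma>))" .
  hence "a * norm (qderiv q \<phi> (lattice_pt q \<gamma> k \<epsilon>)) * a ^ m
      \<le> a * (B / ((1 - q) * (\<rho> - \<gamma>))) * \<gamma> ^ m"
    using a \<rho> q_less_1 by (intro mult_mono power_mono mult_left_mono) auto
  also have "\<dots> = B / ((1 - q) * (\<rho> - \<gamma>)) * geom_majorant q \<gamma> m (k, \<epsilon>)"
    using k by (simp add: geom_majorant_def a_def mult_ac)
  finally show ?thesis
    unfolding moment_term_eq norm_mult norm_power norm_of_real norm_lattice_pt[OF \<epsilon>] a_def[symmetric]
    using a by simp
qed

lemma norm_moment_term_qderiv_le_outer:
  assumes \<epsilon>: "\<epsilon> \<in> {-1, 1}" and k: "k < 0"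
  shows "norm (moment_term q \<gamma> (qderiv q \<phi>) m (k, \<epsilon>))
    \<le> (norm (moment_term q \<gamma> \<phi> m (k, \<epsilon>)) + norm (moment_term q \<gamma> \<phi> m (lattice_shift (k, \<epsilon>))) / q ^ Suc m)
      / ((1 - q) * \<gamma>)"
proof -
  define a where "a = q powi k * \<gamma>"
  define x where "x = lattice_pt q \<gamma> k \<epsilon>"
  define x' where "x' = lattice_pt q \<gamma> (k + 1) \<epsilon>"
  have a: "0 < a" "\<gamma> \<le> a"
    using q_powi_pos[of k] q_powi_ge_1[OF k] gamma_pos by (auto simp: a_def)
  have shift: "q powi (k + 1) * \<gamma> = q * a"
    using q_pos by (simp add: a_def power_int_add_1 mult_ac)
  have weights: "norm (complex_of_real (q powi k * \<gamma>)) = a"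
    "norm (complex_of_real (q powi (k + 1) * \<gamma>)) = q * a"
    unfolding norm_of_real shift a_def[symmetric] using a q_pos by simp_all
  have x: "norm x = a" "norm x' = q * a"
    unfolding x_def x'_def norm_lattice_pt[OF \<epsilon>] shift a_def by simp_all
  have "norm (1 - complex_of_real q) = 1 - q"
    using q_less_1 by (metis abs_of_pos diff_gt_0_iff_gt norm_of_real of_real_1 of_real_diff)
  hence "norm (qderiv q \<phi> x) = norm (\<phi> x - \<phi> x') / ((1 - q) * a)"
    unfolding x_def x'_def qderiv_lattice_pt[OF \<epsilon>] norm_divide norm_mult x(1)[unfolded x_def]
    by (simp only:)
  also have "\<dots> \<le> (norm (\<phi> x) + norm (\<phi> x')) / ((1 - q) * \<gamma>)"
    using a q_less_1 gamma_pos by (intro frac_le norm_triangle_ineq4 mult_left_mono) auto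
  finally have "a * norm (qderiv q \<phi> x) * a ^ m
      \<le> a * ((norm (\<phi> x) + norm (\<phi> x')) / ((1 - q) * \<gamma>)) * a ^ m"
    using a by (intro mult_right_mono mult_left_mono) auto
  also have "\<dots> = (a * norm (\<phi> x) * a ^ m + (q * a) * norm (\<phi> x') * (q * a) ^ m / q ^ Suc m)
      / ((1 - q) * \<gamma>)"
    using q_pos q_less_1 gamma_pos by (simp add: power_mult_distrib field_simps)
  finally show ?thesis
    unfolding moment_term_eq lattice_shift_def fst_conv snd_conv norm_mult norm_power weights
      x_def[symmetric] x'_def[symmetric] x
    by (simp only: mult_ac)
qed

lemma norm_moment_term_qderiv_le:
  assumes \<phi>: "lattice_taylor q \<gamma> \<phi> b \<rho> B" and i: "i \<in> lattice_index"
  shows "norm (moment_term q \<gamma> (qderiv q \<phi>) m i)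
    \<le> B / ((1 - q) * (\<rho> - \<gamma>)) * geom_majorant q \<gamma> m i
      + (norm (moment_term q \<gamma> \<phi> m i) + norm (moment_term q \<gamma> \<phi> m (lattice_shift i)) / q ^ Suc m)
        / ((1 - q) * \<gamma>)"
proof -
  obtain k \<epsilon> where i: "i = (k, \<epsilon>)" "\<epsilon> \<in> {-1, 1}"
    using i by auto
  have \<rho>: "\<gamma> < \<rho>" "0 \<le> B"
    using \<phi> by (auto simp: lattice_taylor_def)
  have "0 \<le> B / ((1 - q) * (\<rho> - \<gamma>)) * geom_majorant q \<gamma> m i"
    using \<rho> q_less_1 geom_majorant_nonneg by auto
  moreover have "0 \<le> (norm (moment_term q \<gamma> \<phi> m i) + norm (moment_term q \<gamma> \<phi> m (lattice_shift i)) / q ^ Suc m)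
        / ((1 - q) * \<gamma>)"
    using q_pos q_less_1 gamma_pos by auto
  ultimately show ?thesis
    using norm_moment_term_qderiv_le_inner[OF \<phi> i(2), of k m]
      norm_moment_term_qderiv_le_outer[OF i(2), of k \<phi> m]
    unfolding i(1) by (cases "0 \<le> k") auto
qed

lemma moment_abs_qderiv_le:
  assumes \<phi>: "lattice_taylor q \<gamma> \<phi> b \<rho> B" and I: "\<phi> \<in> I_inf q \<gamma>"
  shows "(\<lambda>i. norm (moment_term q \<gamma> (qderiv q \<phi>) m i)) summable_on lattice_index"
    and "moment_abs q \<gamma> (qderiv q \<phi>) m
      \<le> B / ((1 - q) * (\<rho> - \<gamma>)) * infsum (geom_majorant q \<gamma> m) lattice_index
        + (1 + 1 / q ^ Suc m) / ((1 - q) * \<gamma>) * moment_abs q \<gamma> \<phi> m"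
proof -
  define N where "N i = norm (moment_term q \<gamma> \<phi> m i)" for i
  define H where "H i = B / ((1 - q) * (\<rho> - \<gamma>)) * geom_majorant q \<gamma> m i
      + (N i + N (lattice_shift i) / q ^ Suc m) / ((1 - q) * \<gamma>)" for i
  have N0: "N summable_on lattice_index"
    using I by (simp add: I_inf_iff_moment_term N_def[abs_def])
  hence N: "N summable_on lattice_index" "(\<lambda>i. N (lattice_shift i)) summable_on lattice_index"
    by (simp_all only: summable_on_lattice_shift_iff)
  have H: "(H has_sum (B / ((1 - q) * (\<rho> - \<gamma>)) * infsum (geom_majorant q \<gamma> m) lattice_index
      + (infsum N lattice_index + infsum (\<lambda>i. N (lattice_shift i)) lattice_index / q ^ Suc m)
        / ((1 - q) * \<gamma>))) lattice_index"
    unfolding H_def by (intro has_sum_add has_sum_cmult_right has_sum_divide_const has_sum_infsum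
        summable_on_geom_majorant N)
  have le: "norm (moment_term q \<gamma> (qderiv q \<phi>) m i) \<le> H i" if "i \<in> lattice_index" for i
    using norm_moment_term_qderiv_le[OF \<phi> that] by (simp add: H_def N_def)
  show sum: "(\<lambda>i. norm (moment_term q \<gamma> (qderiv q \<phi>) m i)) summable_on lattice_index"
    by (rule summable_on_comparison_test[OF has_sum_imp_summable[OF H] le]) auto
  have "moment_abs q \<gamma> (qderiv q \<phi>) m \<le> infsum H lattice_index"
    unfolding moment_abs_def by (rule infsum_mono[OF sum has_sum_imp_summable[OF H] le])
  also have "infsum H lattice_index = B / ((1 - q) * (\<rho> - \<gamma>)) * infsum (geom_majorant q \<gamma> m) lattice_index
      + (1 + 1 / q ^ Suc m) / ((1 - q) * \<gamma>) * moment_abs q \<gamma> \<phi> m"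
    using infsumI[OF H] unfolding infsum_lattice_shift[of N]
    by (simp add: moment_abs_def N_def[abs_def] field_simps)
  finally show "moment_abs q \<gamma> (qderiv q \<phi>) m
      \<le> B / ((1 - q) * (\<rho> - \<gamma>)) * infsum (geom_majorant q \<gamma> m) lattice_index
        + (1 + 1 / q ^ Suc m) / ((1 - q) * \<gamma>) * moment_abs q \<gamma> \<phi> m" .
qed

lemma lattice_taylor_qderiv_iter:
  assumes "lattice_taylor q \<gamma> \<phi> b \<rho> B"
  shows "lattice_taylor q \<gamma> ((qderiv q ^^ d) \<phi>) ((pser_qderiv_coeffs q ^^ d) b) \<rho> (B / ((1 - q) * \<rho>) ^ d)"
  using assms
  by (induction d) (auto dest: lattice_taylor_qderiv simp: field_simps)

lemma I_inf_qderiv_iter: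
  assumes "lattice_taylor q \<gamma> \<phi> b \<rho> B" and "\<phi> \<in> I_inf q \<gamma>"
  shows "(qderiv q ^^ d) \<phi> \<in> I_inf q \<gamma>"
proof (induction d)
  case 0
  then show ?case
    using assms(2) by simp
next
  case (Suc d)
  then show ?case
    using moment_abs_qderiv_le(1)[OF lattice_taylor_qderiv_iter[OF assms(1)]]
    by (simp add: I_inf_iff_moment_term)
qed

text \<open>The Taylor bound \<open>B \<theta>\<^sup>d\<close> of the \<open>d\<close>-th q-derivative enters the estimate of the next
  absolute moment, so the two are bounded together by one geometric sequence.\<close>
lemma moment_abs_qderiv_iter_geometric:
  assumes \<phi>: "lattice_taylor q \<gamma> \<phi> b \<rho> B" and I: "\<phi> \<in> I_inf q \<gamma>"
  obtains C R where "0 \<le> R" and "\<And>d. moment_abs q \<gamma> ((qderiv q ^^ d) \<phi>) m \<le> C * R ^ d"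
proof -
  define \<theta> where "\<theta> = 1 / ((1 - q) * \<rho>)"
  define \<alpha> where "\<alpha> = (1 + 1 / q ^ Suc m) / ((1 - q) * \<gamma>)"
  define \<beta> where "\<beta> = infsum (geom_majorant q \<gamma> m) lattice_index / ((1 - q) * (\<rho> - \<gamma>))"
  define N where "N d = moment_abs q \<gamma> ((qderiv q ^^ d) \<phi>) m" for d
  define R where "R = \<alpha> + \<beta> + \<theta>"
  have \<rho>: "\<gamma> < \<rho>" "0 \<le> B"
    using \<phi> by (auto simp: lattice_taylor_def)
  have "0 \<le> infsum (geom_majorant q \<gamma> m) lattice_index"
    by (rule infsum_nonneg) (rule geom_majorant_nonneg)
  hence nonneg: "0 \<le> \<theta>" "0 \<le> \<alpha>" "0 \<le> \<beta>" "0 \<le> R"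
    using \<rho> q_pos q_less_1 gamma_pos by (auto simp: \<theta>_def \<alpha>_def \<beta>_def R_def)
  have N_nonneg: "0 \<le> N d" for d
    by (simp add: N_def moment_abs_nonneg)
  have step: "N (Suc d) \<le> \<beta> * (B * \<theta> ^ d) + \<alpha> * N d" for d
    using moment_abs_qderiv_le(2)[OF lattice_taylor_qderiv_iter[OF \<phi>, of d] I_inf_qderiv_iter[OF \<phi> I], of m]
    by (simp add: N_def \<alpha>_def \<beta>_def \<theta>_def power_one_over mult_ac)
  have main: "N d + B * \<theta> ^ d \<le> (N 0 + B) * R ^ d" for d
  proof (induction d)
    case 0
    then show ?case
      by simp
  next
    case (Suc d)
    have "0 \<le> (\<beta> + \<theta>) * N d + \<alpha> * (B * \<theta> ^ d)"
      using nonneg N_nonneg[of d] \<rho> by simp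
    with step[of d] have "N (Suc d) + B * \<theta> ^ Suc d \<le> R * (N d + B * \<theta> ^ d)"
      unfolding R_def by (simp add: algebra_simps)
    also have "\<dots> \<le> R * ((N 0 + B) * R ^ d)"
      using Suc nonneg by (intro mult_left_mono) auto
    finally show ?case
      by (simp add: mult_ac)
  qed
  have "N d \<le> (N 0 + B) * R ^ d" for d
    using main[of d] mult_nonneg_nonneg[OF \<rho>(2) zero_le_power[OF nonneg(1), of d]] by linarith
  then show ?thesis
    using that[OF nonneg(4)] unfolding N_def by blast
qed

end

section \<open>q-integration by parts\<close>

context q_lattice
begin

lemma moment_term_qderiv_Suc:
  assumes \<epsilon>: "\<epsilon> \<in> {-1, 1}"
  shows "moment_term q \<gamma> (qderiv q \<phi>) (Suc m) (k, \<epsilon>)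
    = (moment_term q \<gamma> \<phi> m (k, \<epsilon>) - moment_term q \<gamma> \<phi> m (lattice_shift (k, \<epsilon>)) / of_real q ^ Suc m)
      / (1 - of_real q)"
proof -
  define x where "x = lattice_pt q \<gamma> k \<epsilon>"
  define a where "a = complex_of_real (q powi k * \<gamma>)"
  have x: "x \<noteq> 0" "lattice_pt q \<gamma> (k + 1) \<epsilon> = of_real q * x"
    using lattice_pt_neq_0[OF \<epsilon>] mult_q_lattice_pt by (simp_all add: x_def)
  have a: "complex_of_real (q powi (k + 1) * \<gamma>) = of_real q * a"
    unfolding a_def using q_pos by (simp add: power_int_add_1 mult_ac)
  have "qderiv q \<phi> x = (\<phi> x - \<phi> (of_real q * x)) / ((1 - of_real q) * x)"
    using qderiv_lattice_pt[OF \<epsilon>, of \<phi> k] by (simp only: x_def[symmetric] x(2))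
  hence "moment_term q \<gamma> (qderiv q \<phi>) (Suc m) (k, \<epsilon>)
      = a * ((\<phi> x - \<phi> (of_real q * x)) / ((1 - of_real q) * x) * x ^ Suc m)"
    unfolding moment_term_eq x_def[symmetric] a_def[symmetric] by (simp only:)
  also have "\<dots> = (a * (\<phi> x * x ^ m) - (of_real q * a) * (\<phi> (of_real q * x) * (of_real q * x) ^ m)
      / of_real q ^ Suc m) / (1 - of_real q)"
    using x(1) one_minus_q_neq_0 q_pos by (simp add: field_simps power_mult_distrib)
  finally show ?thesis
    unfolding moment_term_eq lattice_shift_def fst_conv snd_conv a x(2) x_def[symmetric] a_def[symmetric] .
qed

lemma qmoment_qderiv_Suc:
  assumes I: "\<phi> \<in> I_inf q \<gamma>"
  shows "qmoment q \<gamma> (Suc m) (qderiv q \<phi>) = - of_real (qnum q (Suc m)) * qmoment q \<gamma> m \<phi>"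
proof -
  let ?T = "moment_term q \<gamma> \<phi> m"
  define S where "S = infsum ?T lattice_index"
  define Q where "Q = complex_of_real q ^ Suc m"
  have T: "?T summable_on lattice_index"
    by (rule abs_summable_summable) (use I in \<open>simp add: I_inf_iff_moment_term\<close>)
  have h1: "(?T has_sum S) lattice_index"
    unfolding S_def by (rule has_sum_infsum[OF T])
  have "(\<lambda>i. ?T (lattice_shift i)) summable_on lattice_index"
    using T by (simp only: summable_on_lattice_shift_iff)
  hence h2: "((\<lambda>i. ?T (lattice_shift i)) has_sum S) lattice_index"
    using has_sum_infsum infsum_lattice_shift[of ?T] by (fastforce simp: S_def)
  have "infsum (moment_term q \<gamma> (qderiv q \<phi>) (Suc m)) lattice_index
      = infsum (\<lambda>i. (?T i + (- 1 / Q) * ?T (lattice_shift i)) / (1 - of_real q)) lattice_index"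
    by (rule infsum_cong) (auto simp: Q_def moment_term_qderiv_Suc)
  also have "\<dots> = (S + (- 1 / Q) * S) / (1 - of_real q)"
    by (intro infsumI has_sum_divide_const has_sum_add h1 has_sum_cmult_right h2)
  finally have D: "infsum (moment_term q \<gamma> (qderiv q \<phi>) (Suc m)) lattice_index
      = (S + (- 1 / Q) * S) / (1 - of_real q)" .
  have "(Suc m)\<^sup>2 + Suc m = (m\<^sup>2 + m) + 2 * Suc m"
    by (simp add: power2_eq_square)
  hence "((Suc m)\<^sup>2 + Suc m) div 2 = (m\<^sup>2 + m) div 2 + Suc m"
    by simp
  hence "qmoment q \<gamma> (Suc m) (qderiv q \<phi>)
      = of_real (q ^ ((m\<^sup>2 + m) div 2)) * Q * ((1 - of_real q) * ((S + (- 1 / Q) * S) / (1 - of_real q)))"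
    unfolding qmoment_eq_moment_term D by (simp add: Q_def power_add)
  also have "\<dots> = - ((1 - Q) / (1 - of_real q)) * (of_real (q ^ ((m\<^sup>2 + m) div 2)) * ((1 - of_real q) * S))"
    using one_minus_q_neq_0 q_pos by (simp add: Q_def field_simps)
  also have "(1 - Q) / (1 - of_real q) = of_real (qnum q (Suc m))"
    by (simp add: Q_def qnum_def)
  finally show ?thesis
    unfolding qmoment_eq_moment_term S_def by simp
qed

lemma moment_term_qderiv_0:
  assumes \<epsilon>: "\<epsilon> \<in> {-1, 1}"
  shows "moment_term q \<gamma> (qderiv q \<phi>) 0 (k, \<epsilon>)
    = of_real \<epsilon> / (1 - of_real q) * (\<phi> (lattice_pt q \<gamma> k \<epsilon>) - \<phi> (lattice_pt q \<gamma> (k + 1) \<epsilon>))"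
proof -
  define c where "c = complex_of_real (q powi k * \<gamma>)"
  have c: "c \<noteq> 0" "lattice_pt q \<gamma> k \<epsilon> = of_real \<epsilon> * c"
    using q_powi_pos[of k] gamma_pos q_pos by (simp_all add: c_def lattice_pt_def mult_ac)
  show ?thesis
    unfolding moment_term_eq qderiv_lattice_pt[OF \<epsilon>, of \<phi> k] c_def[symmetric]
    unfolding c(2)
    using \<epsilon> c(1) one_minus_q_neq_0 by (auto simp: field_simps)
qed

lemma lattice_values_tendsto_0:
  assumes I: "\<phi> \<in> I_inf q \<gamma>" and \<epsilon>: "\<epsilon> \<in> {-1, 1}"
  shows "(\<lambda>n. \<phi> (lattice_pt q \<gamma> (- int n) \<epsilon>)) \<longlonglongrightarrow> 0"
proof -
  let ?T = "\<lambda>n. moment_term q \<gamma> \<phi> 0 (- int n - 1, \<epsilon>)"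
  let ?y = "\<lambda>n. \<phi> (lattice_pt q \<gamma> (- int n - 1) \<epsilon>)"
  have "(\<lambda>i. norm (moment_term q \<gamma> \<phi> 0 i)) summable_on lattice_index"
    using I by (simp add: I_inf_iff_moment_term)
  moreover have "\<epsilon> = 1 \<or> \<epsilon> = -1"
    using \<epsilon> by auto
  ultimately have "(\<lambda>k. norm (moment_term q \<gamma> \<phi> 0 (k, \<epsilon>))) summable_on UNIV"
    unfolding summable_on_lattice_index_iff by auto
  hence "summable (\<lambda>n. norm (?T n))"
    unfolding summable_on_int_iff by blast
  hence majorant: "(\<lambda>n. norm (?T n) / \<gamma>) \<longlonglongrightarrow> 0"
    by (intro tendsto_divide_zero summable_LIMSEQ_zero)
  have "norm (?y n) \<le> norm (?T n) / \<gamma>" for n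
  proof -
    have "norm (?T n) = \<gamma> * (q powi (- int n - 1) * norm (?y n))"
      unfolding moment_term_eq norm_mult norm_of_real using q_powi_pos[of "- int n - 1"] gamma_pos
      by simp
    moreover have "norm (?y n) \<le> q powi (- int n - 1) * norm (?y n)"
      using mult_right_mono[OF q_powi_ge_1[of "- int n - 1"], of "norm (?y n)"] by simp
    ultimately show ?thesis
      using gamma_pos by (simp add: pos_le_divide_eq mult_ac)
  qed
  hence "?y \<longlonglongrightarrow> 0"
    by (intro Lim_null_comparison[OF always_eventually majorant]) simp
  moreover have "- int (Suc n) = - int n - 1" for n
    by simp
  ultimately have "(\<lambda>n. \<phi> (lattice_pt q \<gamma> (- int (Suc n)) \<epsilon>)) \<longlonglongrightarrow> 0"
    by (simp only:)
  then show ?thesis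
    by (rule LIMSEQ_imp_Suc)
qed

lemma infsum_moment_term_qderiv_0_slice:
  assumes \<phi>: "lattice_taylor q \<gamma> \<phi> b \<rho> B" and I: "\<phi> \<in> I_inf q \<gamma>" and \<epsilon>: "\<epsilon> \<in> {-1, 1}"
  shows "infsum (\<lambda>k. moment_term q \<gamma> (qderiv q \<phi>) 0 (k, \<epsilon>)) UNIV = - (of_real \<epsilon> / (1 - of_real q)) * b 0"
proof -
  define u where "u k = \<phi> (lattice_pt q \<gamma> k \<epsilon>)" for k
  define C where "C = of_real \<epsilon> / (1 - complex_of_real q)"
  have T: "moment_term q \<gamma> (qderiv q \<phi>) 0 (k, \<epsilon>) = C * (u k - u (k + 1))" for k
    unfolding C_def u_def by (rule moment_term_qderiv_0[OF \<epsilon>])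
  have "(\<lambda>n. u (int n) - u (int (Suc n))) sums (u 0 - b 0)"
    using telescope_sums'[OF lattice_taylor_tendsto[OF \<phi> \<epsilon>]] by (simp add: u_def)
  hence pos: "(\<lambda>n. moment_term q \<gamma> (qderiv q \<phi>) 0 (int n, \<epsilon>)) sums (C * (u 0 - b 0))"
    unfolding T using sums_mult by (simp add: add.commute)
  have "(\<lambda>n. u (- int n)) \<longlonglongrightarrow> 0"
    using lattice_values_tendsto_0[OF I \<epsilon>] by (simp add: u_def)
  moreover have idx: "- int (Suc n) = - int n - 1" "- int n - 1 + 1 = - int n" for n
    by simp_all
  ultimately have "(\<lambda>n. u (- int n - 1) - u (- int n)) sums (0 - u 0)"
    using telescope_sums by (fastforce simp only: idx of_nat_0 minus_zero)
  hence "(\<lambda>n. C * (u (- int n - 1) - u (- int n - 1 + 1))) sums (C * (0 - u 0))"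
    unfolding idx by (rule sums_mult)
  hence neg: "(\<lambda>n. moment_term q \<gamma> (qderiv q \<phi>) 0 (- int n - 1, \<epsilon>)) sums (C * (0 - u 0))"
    by (simp only: T)
  have "(\<lambda>k. norm (moment_term q \<gamma> (qderiv q \<phi>) 0 (k, \<epsilon>))) summable_on UNIV"
    using moment_abs_qderiv_le(1)[OF \<phi> I, of 0] \<epsilon> unfolding summable_on_lattice_index_iff by auto
  hence "infsum (\<lambda>k. moment_term q \<gamma> (qderiv q \<phi>) 0 (k, \<epsilon>)) UNIV = C * (u 0 - b 0) + C * (0 - u 0)"
    using pos neg by (simp add: infsum_int_split sums_iff)
  also have "\<dots> = - C * b 0"
    by (simp add: algebra_simps)
  finally show ?thesis
    by (simp only: C_def)
qed

lemma qmoment_qderiv_0: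
  assumes \<phi>: "lattice_taylor q \<gamma> \<phi> b \<rho> B" and I: "\<phi> \<in> I_inf q \<gamma>"
  shows "qmoment q \<gamma> 0 (qderiv q \<phi>) = 0"
  using infsum_lattice_index_split[OF moment_abs_qderiv_le(1)[OF \<phi> I, of 0]]
    infsum_moment_term_qderiv_0_slice[OF \<phi> I, of 1] infsum_moment_term_qderiv_0_slice[OF \<phi> I, of "-1"]
  by (simp add: qmoment_eq_moment_term)

lemma qmoment_qderiv_iter:
  assumes \<phi>: "lattice_taylor q \<gamma> \<phi> b \<rho> B" and I: "\<phi> \<in> I_inf q \<gamma>"
  shows "qmoment q \<gamma> n ((qderiv q ^^ d) \<phi>) =
    (if d \<le> n then (-1) ^ d * of_real (qfact q n / qfact q (n - d)) * qmoment q \<gamma> (n - d) \<phi> else 0)"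
proof (induction d arbitrary: n)
  case 0
  then show ?case
    using qfact_pos[OF q_pos q_less_1, of n] by simp
next
  case (Suc d)
  note \<phi>d = lattice_taylor_qderiv_iter[OF \<phi>, of d] and Id = I_inf_qderiv_iter[OF \<phi> I, of d]
  show ?case
  proof (cases n)
    case 0
    then show ?thesis
      using qmoment_qderiv_0[OF \<phi>d Id] by simp
  next
    case (Suc m)
    then show ?thesis
      using qmoment_qderiv_Suc[OF Id, of m] Suc.IH[of m] qfact_Suc[of q m] q_less_1
      by (simp add: field_simps)
  qed
qed

end

context q_lattice
begin

lemma moment_term_suminf:
  assumes c: "summable (\<lambda>d. norm (c d * moment_term q \<gamma> (\<psi> d) n i))" and i: "i \<in> lattice_index"
  shows "moment_term q \<gamma> (\<lambda>x. \<Sum>d. c d * \<psi> d x) n i = (\<Sum>d. c d * moment_term q \<gamma> (\<psi> d) n i)"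
proof -
  obtain k \<epsilon> where i': "i = (k, \<epsilon>)" "\<epsilon> \<in> {-1, 1}"
    using i by auto
  define K where "K = complex_of_real (q powi k * \<gamma>) * lattice_pt q \<gamma> k \<epsilon> ^ n"
  have K: "K \<noteq> 0"
    using lattice_pt_neq_0[OF i'(2)] q_powi_pos[of k] gamma_pos q_pos by (simp add: K_def)
  have T: "c d * moment_term q \<gamma> (\<psi> d) n i = K * (c d * \<psi> d (lattice_pt q \<gamma> k \<epsilon>))" for d
    by (simp add: i'(1) moment_term_eq K_def mult_ac)
  have "summable (\<lambda>d. c d * \<psi> d (lattice_pt q \<gamma> k \<epsilon>))"
    using summable_norm_cancel[OF c] K unfolding T by simp
  hence "(\<Sum>d. c d * moment_term q \<gamma> (\<psi> d) n i) = K * (\<Sum>d. c d * \<psi> d (lattice_pt q \<gamma> k \<epsilon>))"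
    unfolding T by (rule suminf_mult)
  then show ?thesis
    by (simp add: i'(1) moment_term_eq K_def mult_ac)
qed

lemma qmoment_suminf:
  assumes I: "\<And>d. \<psi> d \<in> I_inf q \<gamma>" and c: "summable (\<lambda>d. norm (c d) * moment_abs q \<gamma> (\<psi> d) n)"
  shows "qmoment q \<gamma> n (\<lambda>x. \<Sum>d. c d * \<psi> d x) = (\<Sum>d. c d * qmoment q \<gamma> n (\<psi> d))"
proof -
  let ?T = "\<lambda>d i. c d * moment_term q \<gamma> (\<psi> d) n i"
  have rows: "((\<lambda>i. norm (?T d i)) has_sum (norm (c d) * moment_abs q \<gamma> (\<psi> d) n)) lattice_index" for d
    using has_sum_cmult_right[OF has_sum_infsum, of "\<lambda>i. norm (moment_term q \<gamma> (\<psi> d) n i)", of lattice_index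
        "norm (c d)"] I[of d]
    by (simp add: moment_abs_def norm_mult I_inf_iff_moment_term)
  have "moment_term q \<gamma> (\<lambda>x. \<Sum>d. c d * \<psi> d x) n i = (\<Sum>d. ?T d i)" if "i \<in> lattice_index" for i
    by (rule moment_term_suminf[OF summable_norm_column[OF rows c that] that])
  hence "infsum (moment_term q \<gamma> (\<lambda>x. \<Sum>d. c d * \<psi> d x) n) lattice_index
      = infsum (\<lambda>i. \<Sum>d. ?T d i) lattice_index"
    by (rule infsum_cong)
  also have "\<dots> = (\<Sum>d. infsum (?T d) lattice_index)"
    by (rule infsum_suminf_exchange[OF rows c])
  also have "\<dots> = (\<Sum>d. c d * infsum (moment_term q \<gamma> (\<psi> d) n) lattice_index)"
    by (simp only: infsum_cmult_right')
  finally have sum_eq: "infsum (moment_term q \<gamma> (\<lambda>x. \<Sum>d. c d * \<psi> d x) n) lattice_index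
      = (\<Sum>d. c d * infsum (moment_term q \<gamma> (\<psi> d) n) lattice_index)" .
  have "norm (infsum (moment_term q \<gamma> (\<psi> d) n) lattice_index) \<le> moment_abs q \<gamma> (\<psi> d) n" for d
    unfolding moment_abs_def
    by (rule norm_infsum_bound) (use I[of d] in \<open>simp add: I_inf_iff_moment_term\<close>)
  hence "norm (c d * infsum (moment_term q \<gamma> (\<psi> d) n) lattice_index)
      \<le> norm (c d) * moment_abs q \<gamma> (\<psi> d) n" for d
    unfolding norm_mult by (rule mult_left_mono) simp
  hence "summable (\<lambda>d. norm (c d * infsum (moment_term q \<gamma> (\<psi> d) n) lattice_index))"
    by (intro summable_comparison_test[OF _ c]) auto
  hence summable: "summable (\<lambda>d. c d * infsum (moment_term q \<gamma> (\<psi> d) n) lattice_index)"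
    by (rule summable_norm_cancel)
  define K where "K = complex_of_real (q ^ ((n\<^sup>2 + n) div 2)) * of_real (1 - q)"
  have M: "qmoment q \<gamma> n \<psi>' = K * infsum (moment_term q \<gamma> \<psi>' n) lattice_index" for \<psi>'
    by (simp add: qmoment_eq_moment_term K_def mult_ac)
  have "qmoment q \<gamma> n (\<lambda>x. \<Sum>d. c d * \<psi> d x)
      = K * (\<Sum>d. c d * infsum (moment_term q \<gamma> (\<psi> d) n) lattice_index)"
    unfolding M sum_eq ..
  also have "\<dots> = (\<Sum>d. K * (c d * infsum (moment_term q \<gamma> (\<psi> d) n) lattice_index))"
    by (rule suminf_mult[OF summable, symmetric])
  also have "\<dots> = (\<Sum>d. c d * qmoment q \<gamma> n (\<psi> d))"
    unfolding M by (simp only: mult.left_commute)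
  finally show ?thesis .
qed

lemma qmoment_series_qderiv:
  assumes c: "\<And>R. summable (\<lambda>d. norm (c d) * R ^ d)"
    and \<phi>: "lattice_taylor q \<gamma> \<phi> b \<rho> B" and I: "\<phi> \<in> I_inf q \<gamma>"
  shows "qmoment q \<gamma> n (\<lambda>x. \<Sum>d. c d * (qderiv q ^^ d) \<phi> x)
    = (\<Sum>d\<le>n. c d * qmoment q \<gamma> n ((qderiv q ^^ d) \<phi>))"
proof -
  obtain C R where R: "0 \<le> R" and N: "\<And>d. moment_abs q \<gamma> ((qderiv q ^^ d) \<phi>) n \<le> C * R ^ d"
    using moment_abs_qderiv_iter_geometric[OF \<phi> I, where m = n] by blast
  have "norm (norm (c d) * moment_abs q \<gamma> ((qderiv q ^^ d) \<phi>) n) \<le> C * (norm (c d) * R ^ d)" for d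
    using mult_left_mono[OF N[of d], of "norm (c d)"] moment_abs_nonneg by (simp add: mult_ac)
  hence "summable (\<lambda>d. norm (c d) * moment_abs q \<gamma> ((qderiv q ^^ d) \<phi>) n)"
    by (intro summable_comparison_test[OF _ summable_mult[OF c[of R], of C]]) auto
  hence "qmoment q \<gamma> n (\<lambda>x. \<Sum>d. c d * (qderiv q ^^ d) \<phi> x)
      = (\<Sum>d. c d * qmoment q \<gamma> n ((qderiv q ^^ d) \<phi>))"
    by (rule qmoment_suminf[OF I_inf_qderiv_iter[OF \<phi> I]])
  also have "\<dots> = (\<Sum>d\<le>n. c d * qmoment q \<gamma> n ((qderiv q ^^ d) \<phi>))"
    by (rule suminf_finite) (auto simp: qmoment_qderiv_iter[OF \<phi> I])
  finally show ?thesis .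
qed

end

section \<open>The q-convolution acting on \<open>M\<^sub>s\<close>\<close>

definition qconv_coeff :: "real \<Rightarrow> real \<Rightarrow> (complex \<Rightarrow> complex) \<Rightarrow> nat \<Rightarrow> complex" where
  "qconv_coeff q \<gamma> f e = (-1) ^ e * qmoment q \<gamma> e f / complex_of_real (qfact q e)"

lemma qconv_eq: "qconv q \<gamma> f g x = (\<Sum>e. qconv_coeff q \<gamma> f e * (qderiv q ^^ e) g x)"
  by (simp add: qconv_def qconv_term_def qconv_coeff_def)

lemma qconv_defined_iff:
  "qconv_defined q \<gamma> f g x \<longleftrightarrow> summable (\<lambda>e. norm (qconv_coeff q \<gamma> f e * (qderiv q ^^ e) g x))"
  by (simp add: qconv_defined_def qconv_term_def qconv_coeff_def)

lemma I_E_qconv_coeff_summable: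
  assumes "f \<in> I_E q \<gamma>"
  shows "summable (\<lambda>e. norm (qconv_coeff q \<gamma> f e) * R ^ e)"
proof -
  define a where "a k = qmoment q \<gamma> k f / complex_of_real (qfact q k)" for k
  have "\<forall>t. summable (\<lambda>k. qmoment q \<gamma> k f * t ^ k / complex_of_real (qfact q k))"
    using assms unfolding I_E_def by blast
  hence "summable (\<lambda>k. a k * of_real (\<bar>R\<bar> + 1) ^ k)"
    unfolding a_def times_divide_eq_left by blast
  hence majorant: "summable (\<lambda>k. norm (a k * of_real \<bar>R\<bar> ^ k))"
    by (rule powser_insidea) simp
  have "norm (norm (qconv_coeff q \<gamma> f e) * R ^ e) = norm (a e * of_real \<bar>R\<bar> ^ e)" for e
    by (simp add: qconv_coeff_def a_def norm_mult norm_divide norm_power abs_mult power_abs)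
  then show ?thesis
    by (intro summable_comparison_test'[OF majorant, where N = 0]) simp
qed

lemma HD_I_E_imp_I_E: "f \<in> HD_I_E q \<gamma> \<Longrightarrow> f \<in> I_E q \<gamma>"
  by (simp add: HD_I_E_def)

lemma I_E_imp_I_inf: "f \<in> I_E q \<gamma> \<Longrightarrow> f \<in> I_inf q \<gamma>"
  by (simp add: I_E_def)

context q_lattice
begin

lemma qconv_coeff_qconv:
  assumes f: "f \<in> I_E q \<gamma>" and g: "g \<in> HD_I_E q \<gamma>"
  shows "qconv_coeff q \<gamma> (qconv q \<gamma> f g) n = (\<Sum>d\<le>n. qconv_coeff q \<gamma> f d * qconv_coeff q \<gamma> g (n - d))"
proof -
  obtain b \<rho> B where g_taylor: "lattice_taylor q \<gamma> g b \<rho> B"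
    using HD_I_E_lattice_taylor[OF g] .
  note g_inf = I_E_imp_I_inf[OF HD_I_E_imp_I_E[OF g]]
  have fact: "complex_of_real (qfact q k) \<noteq> 0" for k
    using qfact_pos[OF q_pos q_less_1, of k] by simp
  have "qmoment q \<gamma> n (qconv q \<gamma> f g)
      = (\<Sum>d\<le>n. qconv_coeff q \<gamma> f d * qmoment q \<gamma> n ((qderiv q ^^ d) g))"
    unfolding qconv_eq[abs_def]
    by (rule qmoment_series_qderiv[OF I_E_qconv_coeff_summable[OF f] g_taylor g_inf])
  also have "\<dots> = (\<Sum>d\<le>n. qconv_coeff q \<gamma> f d * ((-1) ^ d
      * (of_real (qfact q n) / of_real (qfact q (n - d))) * qmoment q \<gamma> (n - d) g))"
    by (intro sum.cong refl) (simp add: qmoment_qderiv_iter[OF g_taylor g_inf])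
  finally have moment: "qconv_coeff q \<gamma> (qconv q \<gamma> f g) n = (\<Sum>d\<le>n. (-1) ^ n * (qconv_coeff q \<gamma> f d
      * ((-1) ^ d * (of_real (qfact q n) / of_real (qfact q (n - d))) * qmoment q \<gamma> (n - d) g))
      / of_real (qfact q n))"
    unfolding qconv_coeff_def[of q \<gamma> "qconv q \<gamma> f g"] by (simp only: sum_distrib_left sum_divide_distrib)
  have reorder: "sn * (c * (sd * (Q / Q') * m)) / Q = c * ((sn * sd) * m / Q')"
    if "Q \<noteq> 0" "Q' \<noteq> 0" for sn c sd Q Q' m :: complex
    using that by (simp add: field_simps)
  have sign: "(-1::complex) ^ n * (-1) ^ d = (-1) ^ (n - d)" if "d \<le> n" for d
  proof -
    have "n + d = (n - d) + 2 * d"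
      using that by simp
    hence "(-1::complex) ^ (n + d) = (-1) ^ (n - d) * ((-1) ^ 2) ^ d"
      by (simp only: power_add power_mult)
    then show ?thesis
      by (simp add: power_add)
  qed
  show ?thesis
    unfolding moment using fact
    by (intro sum.cong refl) (simp add: reorder sign qconv_coeff_def)
qed

end

context q_weight
begin

lemma qconv_Ms_repr:
  assumes g: "summable (\<lambda>e. norm (qconv_coeff q \<gamma> g e) * Ms_qderiv_factor q s ^ e)"
    and F: "Ms_repr q F a" and a: "Ms_coeff_bound q s C a"
  shows "Ms_repr q (qconv q \<gamma> g F) (Ms_action_coeffs q (qconv_coeff q \<gamma> g) a)"
    and "\<And>x. \<bar>Im x\<bar> < 1 \<Longrightarrow> qconv_defined q \<gamma> g F x"
  using Ms_repr_action[OF F a g] by (simp_all add: Ms_repr_def qconv_eq qconv_defined_iff)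

lemma qconv_M_s:
  assumes g: "g \<in> I_E q \<gamma>" and F: "F \<in> M_s q s"
  shows "qconv q \<gamma> g F \<in> M_s q s" and "\<And>x. \<bar>Im x\<bar> < 1 \<Longrightarrow> qconv_defined q \<gamma> g F x"
proof -
  obtain a C where "Ms_repr q F a" and a: "Ms_coeff_bound q s C a"
    using F by (auto simp: M_s_iff)
  note repr = qconv_Ms_repr[OF I_E_qconv_coeff_summable[OF g] this]
  show "qconv q \<gamma> g F \<in> M_s q s"
    using repr(1) Ms_coeff_bound_action[OF a I_E_qconv_coeff_summable[OF g]] by (auto simp: M_s_iff)
  show "\<And>x. \<bar>Im x\<bar> < 1 \<Longrightarrow> qconv_defined q \<gamma> g F x"
    by (rule repr(2))
qed

lemma qconv_left_commute_M_s:
  assumes f: "f \<in> I_E q \<gamma>" and g: "g \<in> I_E q \<gamma>" and F: "F \<in> M_s q s" and x: "\<bar>Im x\<bar> < 1"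
  shows "qconv q \<gamma> f (qconv q \<gamma> g F) x = qconv q \<gamma> g (qconv q \<gamma> f F) x"
proof -
  obtain a C where F_repr: "Ms_repr q F a" and a: "Ms_coeff_bound q s C a"
    using F by (auto simp: M_s_iff)
  note cf = I_E_qconv_coeff_summable[OF f] and cg = I_E_qconv_coeff_summable[OF g]
  note gF = qconv_Ms_repr(1)[OF cg F_repr a] Ms_coeff_bound_action[OF a cg]
  note fF = qconv_Ms_repr(1)[OF cf F_repr a] Ms_coeff_bound_action[OF a cf]
  have "Ms_repr q (qconv q \<gamma> f (qconv q \<gamma> g F))
      (Ms_action_coeffs q (qconv_coeff q \<gamma> f) (Ms_action_coeffs q (qconv_coeff q \<gamma> g) a))"
    "Ms_repr q (qconv q \<gamma> g (qconv q \<gamma> f F))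
      (Ms_action_coeffs q (qconv_coeff q \<gamma> g) (Ms_action_coeffs q (qconv_coeff q \<gamma> f) a))"
    by (rule qconv_Ms_repr(1)[OF cf gF], rule qconv_Ms_repr(1)[OF cg fF])
  with x show ?thesis
    unfolding Ms_repr_def Ms_action_coeffs_commute[OF a cf cg] by metis
qed

end

locale q_weight_lattice = q_weight + q_lattice
begin

lemma qconv_assoc_M_s:
  assumes f: "f \<in> I_E q \<gamma>" and g: "g \<in> HD_I_E q \<gamma>" and F: "F \<in> M_s q s" and x: "\<bar>Im x\<bar> < 1"
  shows "qconv q \<gamma> (qconv q \<gamma> f g) F x = qconv q \<gamma> f (qconv q \<gamma> g F) x"
proof -
  obtain a C where F_repr: "Ms_repr q F a" and a: "Ms_coeff_bound q s C a"
    using F by (auto simp: M_s_iff)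
  note cf = I_E_qconv_coeff_summable[OF f] and cg = I_E_qconv_coeff_summable[OF HD_I_E_imp_I_E[OF g]]
  have cfg: "qconv_coeff q \<gamma> (qconv q \<gamma> f g)
      = (\<lambda>n. \<Sum>d\<le>n. qconv_coeff q \<gamma> f d * qconv_coeff q \<gamma> g (n - d))"
    using qconv_coeff_qconv[OF f g] by auto
  have "summable (\<lambda>n. norm (qconv_coeff q \<gamma> (qconv q \<gamma> f g) n) * Ms_qderiv_factor q s ^ n)"
    unfolding cfg using Ms_qderiv_factor_pos by (intro summable_Cauchy_product_weighted cf cg) simp
  hence "Ms_repr q (qconv q \<gamma> (qconv q \<gamma> f g) F) (Ms_action_coeffs q (qconv_coeff q \<gamma> (qconv q \<gamma> f g)) a)"
    by (rule qconv_Ms_repr(1)[OF _ F_repr a])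
  hence "Ms_repr q (qconv q \<gamma> (qconv q \<gamma> f g) F)
      (Ms_action_coeffs q (qconv_coeff q \<gamma> f) (Ms_action_coeffs q (qconv_coeff q \<gamma> g) a))"
    unfolding cfg Ms_action_coeffs_Cauchy_product[OF a cf cg] .
  moreover have "Ms_repr q (qconv q \<gamma> f (qconv q \<gamma> g F))
      (Ms_action_coeffs q (qconv_coeff q \<gamma> f) (Ms_action_coeffs q (qconv_coeff q \<gamma> g) a))"
    by (rule qconv_Ms_repr(1)[OF cf qconv_Ms_repr(1)[OF cg F_repr a] Ms_coeff_bound_action[OF a cg]])
  ultimately show ?thesis
    using x by (simp add: Ms_repr_def)
qed

end

theorem proposition5p2:
  fixes q \<gamma> s :: real
  assumes "0 < q" and "q < 1" and "0 < \<gamma>" and "0 < s" and "s < 1 / sqrt q"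
  shows "(\<forall>g \<in> HD_I_E q \<gamma>. \<forall>F \<in> M_s q s.
            (\<forall>x. \<bar>Im x\<bar> < 1 \<longrightarrow> qconv_defined q \<gamma> g F x) \<and> qconv q \<gamma> g F \<in> M_s q s)
       \<and> (\<forall>f \<in> HD_I_E q \<gamma>. \<forall>g \<in> HD_I_E q \<gamma>. \<forall>F \<in> M_s q s. \<forall>x. \<bar>Im x\<bar> < 1 \<longrightarrow>
            qconv q \<gamma> (qconv q \<gamma> f g) F x = qconv q \<gamma> f (qconv q \<gamma> g F) x)
       \<and> (\<forall>f \<in> HD_I_E q \<gamma>. \<forall>g \<in> HD_I_E q \<gamma>. \<forall>F \<in> M_s q s. \<forall>x. \<bar>Im x\<bar> < 1 \<longrightarrow>
            qconv q \<gamma> f (qconv q \<gamma> g F) x = qconv q \<gamma> g (qconv q \<gamma> f F) x)"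
proof -
  interpret q_weight_lattice q s \<gamma>
    using assms by unfold_locales
  show ?thesis
    using qconv_M_s qconv_assoc_M_s qconv_left_commute_M_s HD_I_E_imp_I_E by blast
qed

end
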